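(* The following problem is decidable: given a finite alphabet $\mathcal{A}$, a finite set $\mathcal{F}$ of finite patterns on $\mathbb{Z}^d$, and $T\in\mathbb{N}$, does player $A$ have a strategy to win the game $\Gamma(\mathcal{A},\mathcal{F},\mathbb{Z}^d)$ in $T$ moves or less (i.e. is the game value of $\Gamma(\mathcal{A},\mathcal{F},\mathbb{Z}^d)$ at most $T$)?
   Context: Fix $d\ge 1$. A pattern is $p=(S,f)$ with $S\subseteq\mathbb{Z}^d$ and $f\in\mathcal{A}^S$. A finite pattern $q=(S',g)$ appears in $p=(S,f)$ if there is $v\in\mathbb{Z}^d$ with $v+S'\subseteq S$ and $f(v+j)=g(j)$ for all $j\in S'$. The Domino game $\Gamma(\mathcal{A},\mathcal{F},E)$ for $E\subseteq\mathbb{Z}^d$: players $A$ and $B$ alternate turns, $A$ first, starting from the empty pattern; on a turn the current player passes or colours one uncoloured cell of $E$ with a colour of $\mathcal{A}$. A position $(p,\rho)$ is final if a pattern of $\mathcal{F}$ appears in $p$, and then $A$ wins; $B$ wins if no final position occurs. Values are defined inductively: a final position has value $0$; a position with $A$ to move that has a move to a position winning for $A$ is winning for $A$ with value $1+\min$ of the values of such successors; a position with $B$ to move all of whose successors are winning for $A$ is winning for $A$ with value $1+\sup$ of the successor values. "$A$ wins in $T$ moves or less" means the initial position (empty pattern, $A$ to move) is winning for $A$ with value $\le T$, i.e. $A$ has a strategy guaranteeing a final position within $T$ turns (turns of both players counted). *)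

theory Defs
  imports Main "HOL-Library.Nat_Bijection"
begin

datatype recf = Zero | Succ | Proj nat | Comp recf "recf list" | Prec recf recf | Mn recf

inductive eval :: "recf \<Rightarrow> nat list \<Rightarrow> nat \<Rightarrow> bool" where
  zero: "eval Zero xs 0"
| succ: "eval Succ (x # xs) (Suc x)"
| proj: "i < length xs \<Longrightarrow> eval (Proj i) xs (xs ! i)"
| comp: "list_all2 (\<lambda>g y. eval g xs y) gs ys \<Longrightarrow> eval f ys z \<Longrightarrow> eval (Comp f gs) xs z"
| prec0: "eval f xs y \<Longrightarrow> eval (Prec f g) (0 # xs) y"
| precS: "eval (Prec f g) (n # xs) y \<Longrightarrow> eval g (n # y # xs) z \<Longrightarrow> eval (Prec f g) (Suc n # xs) z"
| mn: "eval f (n # xs) 0 \<Longrightarrow> (\<forall>m<n. \<exists>y. eval f (m # xs) y \<and> 0 < y) \<Longrightarrow> eval (Mn f) xs n"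

definition decidable :: "(nat \<Rightarrow> bool) \<Rightarrow> bool" where
  "decidable P \<longleftrightarrow> (\<exists>f. \<forall>n. eval f [n] (if P n then 1 else 0))"

text \<open>Cells of Z^d are integer lists of length d; colours are natural numbers; the alphabet is
given as a list of colours.\<close>

type_synonym cell = "int list"
type_synonym fpattern = "(cell \<times> nat) list"
type_synonym position = "cell \<Rightarrow> nat option"

definition vadd :: "cell \<Rightarrow> cell \<Rightarrow> cell" where
  "vadd v j = map2 (+) v j"

definition wf_fpattern :: "nat \<Rightarrow> fpattern \<Rightarrow> bool" where
  "wf_fpattern d q \<longleftrightarrow> (\<forall>(j, c) \<in> set q. length j = d) \<and> distinct (map fst q)"

definition appears :: "nat \<Rightarrow> fpattern \<Rightarrow> position \<Rightarrow> bool" where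
  "appears d q p \<longleftrightarrow> (\<exists>v. length v = d \<and> (\<forall>(j, c) \<in> set q. p (vadd v j) = Some c))"

definition final :: "nat \<Rightarrow> fpattern list \<Rightarrow> position \<Rightarrow> bool" where
  "final d F p \<longleftrightarrow> (\<exists>q \<in> set F. appears d q p)"

definition move :: "nat \<Rightarrow> nat list \<Rightarrow> position \<Rightarrow> position \<Rightarrow> bool" where
  "move d Al p p' \<longleftrightarrow> p' = p \<or>
     (\<exists>x c. length x = d \<and> p x = None \<and> c \<in> set Al \<and> p' = p(x \<mapsto> c))"

text \<open>wins_within d Al F n p a: the position (p, player to move), where a = True means
player A is to move, is winning for A with value at most n.\<close>
fun wins_within :: "nat \<Rightarrow> nat list \<Rightarrow> fpattern list \<Rightarrow> nat \<Rightarrow> position \<Rightarrow> bool \<Rightarrow> bool" where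
  "wins_within d Al F 0 p a = final d F p"
| "wins_within d Al F (Suc n) p a =
     (final d F p \<or>
      (a \<and> (\<exists>p'. move d Al p p' \<and> wins_within d Al F n p' False)) \<or>
      (\<not> a \<and> (\<forall>p'. move d Al p p' \<longrightarrow> wins_within d Al F n p' True)))"

definition A_wins_in :: "nat \<Rightarrow> nat list \<Rightarrow> fpattern list \<Rightarrow> nat \<Rightarrow> bool" where
  "A_wins_in d Al F T \<longleftrightarrow> wins_within d Al F T Map.empty True"

definition encode_cell :: "cell \<Rightarrow> nat" where
  "encode_cell v = list_encode (map int_encode v)"

definition encode_fpattern :: "fpattern \<Rightarrow> nat" where
  "encode_fpattern q = list_encode (map (\<lambda>(v, c). prod_encode (encode_cell v, c)) q)"

definition encode_instance :: "nat list \<Rightarrow> fpattern list \<Rightarrow> nat \<Rightarrow> nat" where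
  "encode_instance Al F T =
     prod_encode (list_encode Al, prod_encode (list_encode (map encode_fpattern F), T))"

definition domino_problem :: "nat \<Rightarrow> nat \<Rightarrow> bool" where
  "domino_problem d n \<longleftrightarrow>
     (\<exists>Al F T. n = encode_instance Al F T \<and> (\<forall>q \<in> set F. wf_fpattern d q) \<and> A_wins_in d Al F T)"

end

theory Submission
  imports Defs
begin

text \<open>Call two positions locally isomorphic at scale \<open>L\<close> if a colour-preserving bijection
  between their coloured cells acts as a translation on every pair of \<open>L\<close>-near cells and keeps
  \<open>L\<close>-far pairs far. If the forbidden patterns have diameter at most \<open>D\<close>, locally isomorphic
  positions at scale \<open>D * 2 ^ n\<close> have the same outcome in \<open>n\<close> moves, because every move on one
  side can be copied on the other at half the scale. In particular a move far from all coloured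
  cells is as good as a move in any other such cell, so the game of \<open>T\<close> moves on \<open>\<int>\<^sup>d\<close> has the
  same value as the game in which the \<open>k\<close>-th move is confined to a box whose radius shrinks by
  more than \<open>D * 2 ^ T\<close> at each move. That finite game is solved by backward induction on a table
  of the codes of all positions in the largest box, and the whole computation is primitive
  recursive in the code of the instance.\<close>

section \<open>Local isomorphisms of positions\<close>

definition near :: "nat \<Rightarrow> int \<Rightarrow> cell \<Rightarrow> cell \<Rightarrow> bool" where
  "near d L x y \<longleftrightarrow> (\<forall>t<d. \<bar>x ! t - y ! t\<bar> \<le> L)"

lemma near_refl: "0 \<le> L \<Longrightarrow> near d L x x"
  unfolding near_def by simp

lemma near_sym: "near d L x y \<longleftrightarrow> near d L y x"
  unfolding near_def by (auto simp: abs_minus_commute)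

lemma near_mono: "near d L x y \<Longrightarrow> L \<le> L' \<Longrightarrow> near d L' x y"
  unfolding near_def by force

lemma near_trans: "near d L x y \<Longrightarrow> near d L' y z \<Longrightarrow> near d (L + L') x z"
  unfolding near_def by (smt (verit))

lemma near_trans_double: "near d L' x y \<Longrightarrow> near d L' y z \<Longrightarrow> 2 * L' \<le> L \<Longrightarrow> near d L x z"
  using near_trans[of d L' x y L' z] near_mono[of d "L' + L'" x z L] by simp

lemma near_diff_cong: "(\<forall>t<d. y' ! t - x' ! t = y ! t - x ! t) \<Longrightarrow> near d L x y \<longleftrightarrow> near d L x' y'"
  unfolding near_def by (metis abs_minus_commute)

lemma cell_eqI: "length x = d \<Longrightarrow> length y = d \<Longrightarrow> (\<forall>t<d. x ! t = y ! t) \<Longrightarrow> x = y"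
  by (simp add: nth_equalityI)

lemma nth_vadd: "t < length v \<Longrightarrow> t < length j \<Longrightarrow> vadd v j ! t = v ! t + j ! t"
  by (simp add: vadd_def)

lemma length_vadd: "length (vadd v j) = min (length v) (length j)"
  by (simp add: vadd_def)

definition wf_position :: "nat \<Rightarrow> position \<Rightarrow> bool" where
  "wf_position d p \<longleftrightarrow> finite (dom p) \<and> (\<forall>x\<in>dom p. length x = d)"

lemma wf_position_upd: "wf_position d p \<Longrightarrow> length z = d \<Longrightarrow> wf_position d (p(z \<mapsto> c))"
  unfolding wf_position_def by auto

lemma wf_position_move: "wf_position d p \<Longrightarrow> move d Al p p' \<Longrightarrow> wf_position d p'"
  unfolding move_def using wf_position_upd by blast

definition rigid_pair :: "nat \<Rightarrow> int \<Rightarrow> (cell \<Rightarrow> cell) \<Rightarrow> cell \<Rightarrow> cell \<Rightarrow> bool" where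
  "rigid_pair d L \<phi> x y \<longleftrightarrow>
     (near d L x y \<longrightarrow> (\<forall>t<d. \<phi> y ! t - \<phi> x ! t = y ! t - x ! t)) \<and>
     (\<not> near d L x y \<longrightarrow> \<not> near d L (\<phi> x) (\<phi> y))"

lemma rigid_pair_refl: "0 \<le> L \<Longrightarrow> rigid_pair d L \<phi> x x"
  unfolding rigid_pair_def by (simp add: near_refl)

lemma rigid_pair_sym: "rigid_pair d L \<phi> x y \<Longrightarrow> rigid_pair d L \<phi> y x"
  unfolding rigid_pair_def by (metis minus_diff_eq near_sym)

lemma rigid_pair_near_iff: "rigid_pair d L \<phi> x y \<Longrightarrow> near d L (\<phi> x) (\<phi> y) \<longleftrightarrow> near d L x y"
  unfolding rigid_pair_def using near_diff_cong by blast

lemma rigid_pair_mono: "rigid_pair d L \<phi> x y \<Longrightarrow> L' \<le> L \<Longrightarrow> rigid_pair d L' \<phi> x y"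
  unfolding rigid_pair_def by (meson near_diff_cong near_mono)

lemma rigid_pair_inverse:
  assumes "rigid_pair d L \<phi> x y" "\<psi> (\<phi> x) = x" "\<psi> (\<phi> y) = y"
  shows "rigid_pair d L \<psi> (\<phi> x) (\<phi> y)"
  using assms rigid_pair_near_iff[OF assms(1)] unfolding rigid_pair_def by auto

definition local_iso :: "nat \<Rightarrow> int \<Rightarrow> position \<Rightarrow> position \<Rightarrow> (cell \<Rightarrow> cell) \<Rightarrow> bool" where
  "local_iso d L p p' \<phi> \<longleftrightarrow>
     (\<forall>x\<in>dom p. p' (\<phi> x) = p x) \<and> dom p' \<subseteq> \<phi> ` dom p \<and>
     (\<forall>x\<in>dom p. \<forall>y\<in>dom p. rigid_pair d L \<phi> x y)"

lemma local_iso_id: "local_iso d L p p id"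
  unfolding local_iso_def rigid_pair_def by auto

lemma local_iso_dom: "local_iso d L p p' \<phi> \<Longrightarrow> x \<in> dom p \<Longrightarrow> \<phi> x \<in> dom p'"
  unfolding local_iso_def by (metis domIff)

lemma local_iso_mono: "local_iso d L p p' \<phi> \<Longrightarrow> L' \<le> L \<Longrightarrow> local_iso d L' p p' \<phi>"
  unfolding local_iso_def using rigid_pair_mono by blast

lemma local_iso_inj:
  assumes "wf_position d p" "local_iso d L p p' \<phi>" "0 \<le> L"
  shows "inj_on \<phi> (dom p)"
proof (rule inj_onI)
  fix x y assume xy: "x \<in> dom p" "y \<in> dom p" "\<phi> x = \<phi> y"
  then have r: "rigid_pair d L \<phi> x y" using assms(2) unfolding local_iso_def by blast
  then have "near d L x y" using xy(3) near_refl[OF assms(3)] rigid_pair_near_iff by metis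
  then have "\<forall>t<d. x ! t = y ! t" using r xy(3) unfolding rigid_pair_def by auto
  then show "x = y" using assms(1) xy unfolding wf_position_def by (intro cell_eqI) auto
qed

lemma local_iso_inv:
  assumes "wf_position d p" "local_iso d L p p' \<phi>" "0 \<le> L"
  shows "local_iso d L p' p (inv_into (dom p) \<phi>)"
  unfolding local_iso_def
proof (intro conjI ballI subsetI)
  let ?\<psi> = "inv_into (dom p) \<phi>"
  have inv: "?\<psi> (\<phi> x) = x" if "x \<in> dom p" for x
    using local_iso_inj[OF assms] that by simp
  have img: "y \<in> dom p' \<Longrightarrow> \<exists>x\<in>dom p. y = \<phi> x" for y
    using assms(2) unfolding local_iso_def by blast
  fix y assume y: "y \<in> dom p'"
  then obtain x where x: "x \<in> dom p" "y = \<phi> x" using img by blast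
  show "p (?\<psi> y) = p' y"
    using assms(2) x inv unfolding local_iso_def by simp
  fix y' assume "y' \<in> dom p'"
  then obtain x' where x': "x' \<in> dom p" "y' = \<phi> x'" using img by blast
  show "rigid_pair d L ?\<psi> y y'"
    unfolding x(2) x'(2)
    by (rule rigid_pair_inverse) (use assms(2) x x' inv in \<open>auto simp: local_iso_def\<close>)
next
  let ?\<psi> = "inv_into (dom p) \<phi>"
  fix x assume x: "x \<in> dom p"
  then have "?\<psi> (\<phi> x) = x" using local_iso_inj[OF assms] by simp
  moreover have "\<phi> x \<in> dom p'" using local_iso_dom[OF assms(2) x] .
  ultimately show "x \<in> ?\<psi> ` dom p'" by (metis image_eqI)
qed

definition pattern_diam_le :: "nat \<Rightarrow> int \<Rightarrow> fpattern \<Rightarrow> bool" where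
  "pattern_diam_le d L q \<longleftrightarrow> (\<forall>(j, c)\<in>set q. length j = d \<and> (\<forall>(j', c')\<in>set q. near d L j j'))"

lemma pattern_diam_le_mono: "pattern_diam_le d L q \<Longrightarrow> L \<le> L' \<Longrightarrow> pattern_diam_le d L' q"
  unfolding pattern_diam_le_def using near_mono by fast

text \<open>All cells of an occurrence are \<open>L\<close>-near its first cell, on which \<open>\<phi>\<close> acts as a
  translation.\<close>

lemma appears_local_iso:
  assumes iso: "local_iso d L p p' \<phi>" and wf: "wf_position d p'" and q: "pattern_diam_le d L q"
    and ap: "appears d q p"
  shows "appears d q p'"
proof (cases q)
  case Nil
  then show ?thesis using ap by (auto simp: appears_def)
next
  case (Cons jc0 rest)
  obtain j0 c0 where jc0: "jc0 = (j0, c0)" by fastforce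
  obtain v where v: "length v = d" "\<forall>(j, c)\<in>set q. p (vadd v j) = Some c"
    using ap unfolding appears_def by auto
  have j0: "(j0, c0) \<in> set q" "length j0 = d" using Cons jc0 q unfolding pattern_diam_le_def by auto
  define x0 where "x0 = vadd v j0"
  have x0: "x0 \<in> dom p" using v j0 x0_def by auto
  define v' where "v' = map (\<lambda>t. \<phi> x0 ! t - j0 ! t) [0..<d]"
  show ?thesis unfolding appears_def
  proof (intro exI[of _ v'] conjI ballI)
    show "length v' = d" by (simp add: v'_def)
  next
    fix jc assume jc: "jc \<in> set q"
    obtain j c where jcd: "jc = (j, c)" by fastforce
    have j: "length j = d" "near d L j0 j" using q jc jcd j0 unfolding pattern_diam_le_def by fastforce+
    define x where "x = vadd v j"
    have x: "x \<in> dom p" "p x = Some c" using v jc jcd x_def by auto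
    have dx: "\<forall>t<d. x ! t - x0 ! t = j ! t - j0 ! t"
      using v j j0 by (simp add: x_def x0_def nth_vadd)
    then have "near d L x0 x" using j(2) near_diff_cong by blast
    then have dphi: "\<forall>t<d. \<phi> x ! t - \<phi> x0 ! t = x ! t - x0 ! t"
      using iso x x0 unfolding local_iso_def rigid_pair_def by blast
    have "length (\<phi> x) = d" using local_iso_dom[OF iso x(1)] wf unfolding wf_position_def by auto
    then have "vadd v' j = \<phi> x"
      by (intro cell_eqI[of _ d]) (use j dx dphi in \<open>auto simp: length_vadd v'_def nth_vadd\<close>)
    moreover have "p' (\<phi> x) = Some c" using iso x unfolding local_iso_def by auto
    ultimately show "case jc of (j, c) \<Rightarrow> p' (vadd v' j) = Some c" using jcd by simp
  qed
qed

lemma final_local_iso: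
  assumes "local_iso d L p p' \<phi>" "wf_position d p'" "\<forall>q\<in>set F. pattern_diam_le d L q" "final d F p"
  shows "final d F p'"
  using assms appears_local_iso unfolding final_def by blast

lemma local_iso_update:
  assumes iso: "local_iso d L p p' \<phi>" and L: "0 \<le> L" and z: "p z = None" "p' z' = None"
    and new: "\<forall>y\<in>dom p. rigid_pair d L (\<phi>(z := z')) z y"
  shows "local_iso d L (p(z \<mapsto> c)) (p'(z' \<mapsto> c)) (\<phi>(z := z'))"
proof -
  have ne: "x \<noteq> z" "\<phi> x \<noteq> z'" if "x \<in> dom p" for x
    using that z local_iso_dom[OF iso] by fastforce+
  have "rigid_pair d L (\<phi>(z := z')) x y" if "x \<in> dom p" "y \<in> dom p" for x y
    using iso that ne unfolding local_iso_def rigid_pair_def by auto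
  then have rigid: "rigid_pair d L (\<phi>(z := z')) x y" if "x \<in> insert z (dom p)" "y \<in> insert z (dom p)" for x y
    using that new rigid_pair_sym rigid_pair_refl[OF L] by blast
  have "dom p' \<subseteq> \<phi> ` dom p" using iso unfolding local_iso_def by blast
  then have "dom (p'(z' \<mapsto> c)) \<subseteq> (\<phi>(z := z')) ` dom (p(z \<mapsto> c))"
    using ne by force
  moreover have "(p'(z' \<mapsto> c)) ((\<phi>(z := z')) x) = (p(z \<mapsto> c)) x" if "x \<in> dom (p(z \<mapsto> c))" for x
    using that iso ne unfolding local_iso_def by (cases "x = z") auto
  ultimately show ?thesis
    using rigid unfolding local_iso_def by auto
qed

lemma ex_far_cell:
  assumes "wf_position d p" "0 < d"
  shows "\<exists>z. length z = d \<and> (\<forall>y\<in>dom p. \<not> near d L y z)"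
proof -
  define M where "M = Max (insert 0 ((\<lambda>y. y ! 0) ` dom p))"
  have "finite (insert 0 ((\<lambda>y. y ! 0) ` dom p))" using assms(1) unfolding wf_position_def by auto
  then have M: "y ! 0 \<le> M" if "y \<in> dom p" for y unfolding M_def using that by (intro Max_ge) auto
  define z where "z = (M + \<bar>L\<bar> + 1) # replicate (d - 1) 0"
  have "\<not> near d L y z" if "y \<in> dom p" for y
    using M[OF that] assms(2) unfolding near_def z_def by force
  moreover have "length z = d" using assms(2) by (simp add: z_def)
  ultimately show ?thesis by blast
qed

lemma local_iso_extend_near:
  assumes wf: "wf_position d p" and iso: "local_iso d L p p' \<phi>" and L: "0 \<le> L'" "2 * L' \<le> L"
    and z: "length z = d" "p z = None" and x0: "x0 \<in> dom p" "near d L' x0 z"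
  defines "z' \<equiv> map (\<lambda>t. \<phi> x0 ! t + (z ! t - x0 ! t)) [0..<d]"
  shows "p' z' = None \<and> local_iso d L' (p(z \<mapsto> c)) (p'(z' \<mapsto> c)) (\<phi>(z := z'))"
proof -
  have z'n: "z' ! t = \<phi> x0 ! t + (z ! t - x0 ! t)" if "t < d" for t
    using that by (simp add: z'_def)
  have rigid: "rigid_pair d L \<phi> x y" if "x \<in> dom p" "y \<in> dom p" for x y
    using iso that unfolding local_iso_def by blast
  have transl: "\<phi> y ! t - z' ! t = y ! t - z ! t" if "y \<in> dom p" "near d L x0 y" "t < d" for y t
    using rigid[OF x0(1) that(1)] that z'n unfolding rigid_pair_def by auto
  text \<open>\<open>z\<close> and \<open>z'\<close> sit at the same offset from \<open>x0\<close> and \<open>\<phi> x0\<close>, so whatever is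
    \<open>L'\<close>-near either of them is \<open>L\<close>-near the anchor, where \<open>\<phi>\<close> is a translation.\<close>
  have "near d L' (\<phi> x0) z'"
    using x0(2) z'n unfolding near_def by auto
  then have near_z': "near d L x0 y" if "y \<in> dom p" "near d L' z' (\<phi> y)" for y
    using near_trans_double[OF _ that(2) L(2)] rigid_pair_near_iff[OF rigid[OF x0(1) that(1)]] by blast
  have near_z: "near d L x0 y" if "near d L' z y" for y
    using near_trans_double[OF x0(2) that L(2)] .
  have "p' z' = None"
  proof (rule ccontr)
    assume "p' z' \<noteq> None"
    then obtain y where y: "y \<in> dom p" "\<phi> y = z'" using iso unfolding local_iso_def by blast
    then have "near d L x0 y" using near_z' near_refl[OF L(1)] by simp
    then have "\<forall>t<d. z ! t = y ! t" using transl[OF y(1)] y(2) by simp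
    then have "z = y" using z wf y unfolding wf_position_def by (intro cell_eqI) auto
    then show False using y z by auto
  qed
  moreover have "rigid_pair d L' (\<phi>(z := z')) z y" if y: "y \<in> dom p" for y
  proof -
    have yz: "y \<noteq> z" using y z by auto
    have "\<forall>t<d. \<phi> y ! t - z' ! t = y ! t - z ! t" if "near d L' z y"
      using transl[OF y near_z[OF that]] by simp
    moreover have "\<not> near d L' z' (\<phi> y)" if "\<not> near d L' z y"
      using transl[OF y near_z'[OF y]] near_diff_cong[of d y z "\<phi> y" z' L'] that by auto
    ultimately show ?thesis
      unfolding rigid_pair_def using yz by simp
  qed
  moreover have "local_iso d L' p p' \<phi>"
    by (rule local_iso_mono[OF iso]) (use L in simp)
  ultimately show ?thesis
    using local_iso_update L(1) z(2) by blast
qed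

lemma local_iso_extend_far:
  assumes wf: "wf_position d p'" and iso: "local_iso d L p p' \<phi>" and L: "0 \<le> L'" "L' \<le> L"
    and z: "p z = None" "\<forall>x\<in>dom p. \<not> near d L' x z" and d: "0 < d"
  shows "\<exists>z'. length z' = d \<and> p' z' = None \<and> local_iso d L' (p(z \<mapsto> c)) (p'(z' \<mapsto> c)) (\<phi>(z := z'))"
proof -
  obtain z' where z': "length z' = d" "\<forall>y\<in>dom p'. \<not> near d L' y z'"
    using ex_far_cell[OF wf d] by blast
  have "p' z' = None"
  proof (rule ccontr)
    assume "p' z' \<noteq> None"
    then show False using z'(2) near_refl[OF L(1)] by blast
  qed
  moreover have "rigid_pair d L' (\<phi>(z := z')) z y" if y: "y \<in> dom p" for y
  proof -
    have "y \<noteq> z" using y z(1) by auto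
    moreover have "\<not> near d L' z y" using z(2) y near_sym by blast
    moreover have "\<not> near d L' z' (\<phi> y)" using z'(2) local_iso_dom[OF iso y] near_sym by blast
    ultimately show ?thesis unfolding rigid_pair_def by simp
  qed
  ultimately show ?thesis
    using local_iso_update[OF local_iso_mono[OF iso L(2)] L(1) z(1)] z'(1) by blast
qed

lemma local_iso_extend:
  assumes wf: "wf_position d p" "wf_position d p'" and iso: "local_iso d L p p' \<phi>"
    and L: "0 \<le> L'" "2 * L' \<le> L" and z: "length z = d" "p z = None" and d: "0 < d"
  shows "\<exists>z' \<psi>. length z' = d \<and> p' z' = None \<and> local_iso d L' (p(z \<mapsto> c)) (p'(z' \<mapsto> c)) \<psi>"
proof (cases "\<exists>x0\<in>dom p. near d L' x0 z")
  case True
  then obtain x0 where "x0 \<in> dom p" "near d L' x0 z" by blast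
  from local_iso_extend_near[OF wf(1) iso L z this] show ?thesis
    by (intro exI conjI) auto
next
  case False
  have "L' \<le> L" using L by simp
  from local_iso_extend_far[OF wf(2) iso L(1) this z(2) _ d] False show ?thesis
    by blast
qed

lemma local_iso_move:
  assumes wf: "wf_position d p" "wf_position d p'" and iso: "local_iso d (2 * L) p p' \<phi>"
    and L: "0 \<le> L" and d: "0 < d" and mv: "move d Al p p1"
  shows "\<exists>p1' \<psi>. move d Al p' p1' \<and> local_iso d L p1 p1' \<psi>"
proof -
  consider "p1 = p" | z c where "length z = d" "p z = None" "c \<in> set Al" "p1 = p(z \<mapsto> c)"
    using mv unfolding move_def by blast
  then show ?thesis
  proof cases
    case 1
    moreover have "local_iso d L p p' \<phi>" by (rule local_iso_mono[OF iso]) (use L in simp)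
    ultimately show ?thesis unfolding move_def by blast
  next
    case (2 z c)
    obtain z' \<psi> where "length z' = d" "p' z' = None" "local_iso d L (p(z \<mapsto> c)) (p'(z' \<mapsto> c)) \<psi>"
      using local_iso_extend[OF wf iso L order_refl 2(1,2) d] by blast
    then show ?thesis
      using 2 unfolding move_def by blast
  qed
qed

lemma local_iso_move_back:
  assumes wf: "wf_position d p" "wf_position d p'" and iso: "local_iso d (2 * L) p p' \<phi>"
    and L: "0 \<le> L" and d: "0 < d" and mv: "move d Al p' p2"
  shows "\<exists>p1 \<psi>. move d Al p p1 \<and> local_iso d L p1 p2 \<psi>"
proof -
  have "local_iso d (2 * L) p' p (inv_into (dom p) \<phi>)"
    using local_iso_inv[OF wf(1) iso] L by simp
  then obtain p1 \<chi> where p1: "move d Al p p1" "local_iso d L p2 p1 \<chi>"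
    using local_iso_move[OF wf(2,1) _ L d mv] by blast
  moreover have "wf_position d p2" using wf_position_move[OF wf(2) mv] .
  ultimately show ?thesis using local_iso_inv L by blast
qed

text \<open>The scale \<open>D * 2 ^ n\<close> leaves room for halving once per remaining move.\<close>

lemma wins_within_local_iso:
  assumes d: "0 < d" and D: "0 \<le> D" and F: "\<forall>q\<in>set F. pattern_diam_le d D q"
  shows "wf_position d p \<Longrightarrow> wf_position d p' \<Longrightarrow> local_iso d (D * 2 ^ n) p p' \<phi> \<Longrightarrow>
    wins_within d Al F n p a \<Longrightarrow> wins_within d Al F n p' a"
proof (induction n arbitrary: p p' \<phi> a)
  case 0
  then show ?case using F final_local_iso by auto
next
  case (Suc n)
  have L: "0 \<le> D * 2 ^ n" using D by simp
  have iso: "local_iso d (2 * (D * 2 ^ n)) p p' \<phi>" using Suc.prems(3) by (simp add: mult_ac)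
  have "D * 1 \<le> D * 2 ^ Suc n" by (rule mult_left_mono) (use D one_le_power[of "2::int" "Suc n"] in simp_all)
  then have F': "\<forall>q\<in>set F. pattern_diam_le d (D * 2 ^ Suc n) q"
    using F pattern_diam_le_mono[of d D _ "D * 2 ^ Suc n"] by simp
  have IH: "wins_within d Al F n p2 b" if "wins_within d Al F n p1 b" "local_iso d (D * 2 ^ n) p1 p2 \<psi>"
    "move d Al p p1" "move d Al p' p2" for p1 p2 \<psi> b
    using Suc.IH that wf_position_move Suc.prems(1,2) by blast
  consider "final d F p" | "a" "\<exists>p1. move d Al p p1 \<and> wins_within d Al F n p1 False"
    | "\<not> a" "\<forall>p1. move d Al p p1 \<longrightarrow> wins_within d Al F n p1 True"
    using Suc.prems(4) by auto
  then show ?case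
  proof cases
    case 1
    then show ?thesis using final_local_iso[OF Suc.prems(3,2) F'] by simp
  next
    case 2
    then obtain p1 p1' \<psi> where "move d Al p p1" "wins_within d Al F n p1 False"
      "move d Al p' p1'" "local_iso d (D * 2 ^ n) p1 p1' \<psi>"
      using local_iso_move[OF Suc.prems(1,2) iso L d] by blast
    then show ?thesis using IH 2 by auto
  next
    case 3
    have "wins_within d Al F n p2 True" if "move d Al p' p2" for p2
      using local_iso_move_back[OF Suc.prems(1,2) iso L d that] IH 3 that by blast
    then show ?thesis using 3 by simp
  qed
qed

section \<open>Games confined to boxes\<close>

definition in_box :: "nat \<Rightarrow> int \<Rightarrow> cell \<Rightarrow> bool" where
  "in_box d r x \<longleftrightarrow> length x = d \<and> (\<forall>t<d. \<bar>x ! t\<bar> \<le> r)"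

lemma not_near_if_far_coordinate:
  assumes "in_box d r y" "t < d" "r + L < \<bar>z ! t\<bar>"
  shows "\<not> near d L y z"
  using assms unfolding in_box_def near_def by force

lemma in_box_mono: "in_box d r x \<Longrightarrow> r \<le> r' \<Longrightarrow> in_box d r' x"
  unfolding in_box_def by force

text \<open>The move made when \<open>Suc n\<close> moves remain colours a cell of the box of radius
  \<open>r (Suc n)\<close>.\<close>

fun wins_within_box :: "nat \<Rightarrow> nat list \<Rightarrow> fpattern list \<Rightarrow> (nat \<Rightarrow> int) \<Rightarrow> nat \<Rightarrow> position \<Rightarrow> bool \<Rightarrow> bool"
  where
  "wins_within_box d Al F r 0 p a = final d F p"
| "wins_within_box d Al F r (Suc n) p a =
    (final d F p \<or>
     (a \<and> (wins_within_box d Al F r n p False \<or>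
        (\<exists>x c. in_box d (r (Suc n)) x \<and> p x = None \<and> c \<in> set Al \<and>
          wins_within_box d Al F r n (p(x \<mapsto> c)) False))) \<or>
     (\<not> a \<and> wins_within_box d Al F r n p True \<and>
        (\<forall>x c. in_box d (r (Suc n)) x \<and> p x = None \<and> c \<in> set Al \<longrightarrow>
          wins_within_box d Al F r n (p(x \<mapsto> c)) True)))"

lemma wins_within_far_cells:
  assumes d: "0 < d" and D: "0 \<le> D" and F: "\<forall>q\<in>set F. pattern_diam_le d D q"
    and wf: "wf_position d p" and z: "length z = d" "p z = None" "length z0 = d" "p z0 = None"
    and far: "\<forall>y\<in>dom p. \<not> near d (D * 2 ^ n) y z \<and> \<not> near d (D * 2 ^ n) y z0"
  shows "wins_within d Al F n (p(z \<mapsto> c)) b \<longleftrightarrow> wins_within d Al F n (p(z0 \<mapsto> c)) b"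
proof -
  have L: "0 \<le> D * 2 ^ n" using D by simp
  have swap: "local_iso d (D * 2 ^ n) (p(x \<mapsto> c)) (p(y \<mapsto> c)) (id(x := y))"
    if "p x = None" "p y = None" "\<forall>w\<in>dom p. \<not> near d (D * 2 ^ n) w x \<and> \<not> near d (D * 2 ^ n) w y"
    for x y
  proof (rule local_iso_update[OF local_iso_id L that(1,2)], intro ballI)
    fix w assume w: "w \<in> dom p"
    then have "w \<noteq> x" using that(1) by auto
    then show "rigid_pair d (D * 2 ^ n) (id(x := y)) x w"
      using that(3) w near_sym unfolding rigid_pair_def by auto
  qed
  have wf': "wf_position d (p(z \<mapsto> c))" "wf_position d (p(z0 \<mapsto> c))"
    using wf_position_upd wf z by blast+
  show ?thesis
    using wins_within_local_iso[OF d D F wf' swap] wins_within_local_iso[OF d D F wf'(2,1) swap] z far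
    by blast
qed

lemma ex_move_iff_ex_box_move:
  assumes z0: "in_box d r z0" "p z0 = None"
    and outside: "\<And>z c. length z = d \<Longrightarrow> \<not> in_box d r z \<Longrightarrow> p z = None \<Longrightarrow> Q (p(z \<mapsto> c)) \<longleftrightarrow> Q (p(z0 \<mapsto> c))"
  shows "(\<exists>p'. move d Al p p' \<and> Q p') \<longleftrightarrow>
    Q p \<or> (\<exists>x c. in_box d r x \<and> p x = None \<and> c \<in> set Al \<and> Q (p(x \<mapsto> c)))"
proof
  assume "\<exists>p'. move d Al p p' \<and> Q p'"
  then consider "Q p" | z c where "length z = d" "p z = None" "c \<in> set Al" "Q (p(z \<mapsto> c))"
    unfolding move_def by blast
  then show "Q p \<or> (\<exists>x c. in_box d r x \<and> p x = None \<and> c \<in> set Al \<and> Q (p(x \<mapsto> c)))"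
  proof cases
    case (2 z c)
    show ?thesis
    proof (cases "in_box d r z")
      case False
      then show ?thesis using 2 z0 outside[OF 2(1) False 2(2)] by blast
    qed (use 2 in blast)
  qed simp
next
  assume "Q p \<or> (\<exists>x c. in_box d r x \<and> p x = None \<and> c \<in> set Al \<and> Q (p(x \<mapsto> c)))"
  then show "\<exists>p'. move d Al p p' \<and> Q p'"
    unfolding move_def in_box_def by blast
qed

lemma all_move_iff_all_box_move:
  assumes z0: "in_box d r z0" "p z0 = None"
    and outside: "\<And>z c. length z = d \<Longrightarrow> \<not> in_box d r z \<Longrightarrow> p z = None \<Longrightarrow> Q (p(z \<mapsto> c)) \<longleftrightarrow> Q (p(z0 \<mapsto> c))"
  shows "(\<forall>p'. move d Al p p' \<longrightarrow> Q p') \<longleftrightarrow>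
    Q p \<and> (\<forall>x c. in_box d r x \<and> p x = None \<and> c \<in> set Al \<longrightarrow> Q (p(x \<mapsto> c)))"
proof -
  have "(\<exists>p'. move d Al p p' \<and> \<not> Q p') \<longleftrightarrow>
    \<not> Q p \<or> (\<exists>x c. in_box d r x \<and> p x = None \<and> c \<in> set Al \<and> \<not> Q (p(x \<mapsto> c)))"
    by (rule ex_move_iff_ex_box_move[where p = p, OF z0]) (use outside in blast)
  then show ?thesis by blast
qed

lemma not_near_outside_box:
  assumes "\<forall>y\<in>dom p. in_box d r y" "r + L < R" "length z = d" "\<not> in_box d R z"
  shows "\<forall>y\<in>dom p. \<not> near d L y z"
proof -
  obtain t where t: "t < d" "R < \<bar>z ! t\<bar>" using assms(3,4) unfolding in_box_def by force
  show ?thesis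
  proof (intro ballI)
    fix y assume "y \<in> dom p"
    show "\<not> near d L y z"
      by (rule not_near_if_far_coordinate[OF assms(1)[rule_format, OF \<open>y \<in> dom p\<close>] t(1)])
         (use assms(2) t(2) in linarith)
  qed
qed

lemma wins_within_outside_box:
  assumes d: "0 < d" and D: "0 \<le> D" and F: "\<forall>q\<in>set F. pattern_diam_le d D q"
    and wf: "wf_position d p" and box: "\<forall>y\<in>dom p. in_box d r y" and R: "r + D * 2 ^ n < R" "0 \<le> R"
  obtains z0 where "in_box d R z0" "p z0 = None"
    "\<And>z c b. length z = d \<Longrightarrow> \<not> in_box d R z \<Longrightarrow> p z = None \<Longrightarrow>
      wins_within d Al F n (p(z \<mapsto> c)) b \<longleftrightarrow> wins_within d Al F n (p(z0 \<mapsto> c)) b"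
proof -
  define z0 where "z0 = R # replicate (d - 1) 0"
  have z0: "in_box d R z0" "length z0 = d"
    using d R(2) by (auto simp: z0_def in_box_def nth_Cons split: nat.splits)
  have far: "\<not> near d (D * 2 ^ n) y z0" if "y \<in> dom p" for y
    by (rule not_near_if_far_coordinate[OF box[rule_format, OF that] d]) (use R in \<open>simp add: z0_def\<close>)
  have "p z0 = None"
  proof (rule ccontr)
    assume "p z0 \<noteq> None"
    then show False using far[of z0] near_refl[of "D * 2 ^ n"] D by auto
  qed
  moreover have "wins_within d Al F n (p(z \<mapsto> c)) b \<longleftrightarrow> wins_within d Al F n (p(z0 \<mapsto> c)) b"
    if "length z = d" "\<not> in_box d R z" "p z = None" for z c b
    using wins_within_far_cells[OF d D F wf that(1,3) z0(2) \<open>p z0 = None\<close>]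
      not_near_outside_box[OF box R(1) that(1,2)] far by blast
  ultimately show ?thesis using that z0(1) by blast
qed

text \<open>Since the radii shrink by more than the current scale at each move, the coloured cells always
  lie well inside the box of the next move.\<close>

lemma wins_within_box_iff:
  assumes d: "0 < d" and D: "0 \<le> D" and F: "\<forall>q\<in>set F. pattern_diam_le d D q"
    and r0: "\<And>k. 0 \<le> r k" and r: "\<And>k. k < T \<Longrightarrow> r (Suc (Suc k)) + D * 2 ^ k + 1 \<le> r (Suc k)"
  shows "n \<le> T \<Longrightarrow> wf_position d p \<Longrightarrow> \<forall>x\<in>dom p. in_box d (r (Suc n)) x \<Longrightarrow>
    wins_within_box d Al F r n p a \<longleftrightarrow> wins_within d Al F n p a"
proof (induction n arbitrary: p a)
  case 0
  then show ?case by simp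
next
  case (Suc n)
  let ?R = "r (Suc n)" and ?W = "wins_within d Al F n"
  have rr: "r (Suc (Suc n)) + D * 2 ^ n < ?R" using r[of n] Suc.prems(1) by simp
  obtain z0 where z0: "in_box d ?R z0" "p z0 = None" and outside:
    "\<And>z c b. length z = d \<Longrightarrow> \<not> in_box d ?R z \<Longrightarrow> p z = None \<Longrightarrow> ?W (p(z \<mapsto> c)) b \<longleftrightarrow> ?W (p(z0 \<mapsto> c)) b"
    using wins_within_outside_box[OF d D F Suc.prems(2,3) rr r0] by metis
  have "r (Suc (Suc n)) \<le> ?R" using rr D by (smt (verit) zero_le_mult_iff zero_le_power)
  then have box: "\<forall>x\<in>dom p. in_box d ?R x" using Suc.prems(3) in_box_mono by blast
  have IHp: "wins_within_box d Al F r n p b \<longleftrightarrow> ?W p b" for b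
    using Suc.IH[OF _ Suc.prems(2) box] Suc.prems(1) by simp
  have IHx: "wins_within_box d Al F r n (p(x \<mapsto> c)) b \<longleftrightarrow> ?W (p(x \<mapsto> c)) b" if "in_box d ?R x" for x c b
  proof (rule Suc.IH)
    show "wf_position d (p(x \<mapsto> c))"
      using Suc.prems(2) wf_position_upd that unfolding in_box_def by blast
    show "\<forall>y\<in>dom (p(x \<mapsto> c)). in_box d ?R y"
      using box that by simp
  qed (use Suc.prems(1) in simp)
  have "wins_within_box d Al F r (Suc n) p a \<longleftrightarrow> final d F p \<or>
      (a \<and> (?W p False \<or> (\<exists>x c. in_box d ?R x \<and> p x = None \<and> c \<in> set Al \<and> ?W (p(x \<mapsto> c)) False))) \<or>
      (\<not> a \<and> ?W p True \<and> (\<forall>x c. in_box d ?R x \<and> p x = None \<and> c \<in> set Al \<longrightarrow> ?W (p(x \<mapsto> c)) True))"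
    using IHp IHx by (simp cong: conj_cong)
  also have "\<dots> \<longleftrightarrow> wins_within d Al F (Suc n) p a"
  proof -
    have "(\<exists>p'. move d Al p p' \<and> ?W p' False) \<longleftrightarrow>
        ?W p False \<or> (\<exists>x c. in_box d ?R x \<and> p x = None \<and> c \<in> set Al \<and> ?W (p(x \<mapsto> c)) False)"
      by (rule ex_move_iff_ex_box_move[where Q = "\<lambda>p'. ?W p' False"]) (use z0 outside in auto)
    moreover have "(\<forall>p'. move d Al p p' \<longrightarrow> ?W p' True) \<longleftrightarrow>
        ?W p True \<and> (\<forall>x c. in_box d ?R x \<and> p x = None \<and> c \<in> set Al \<longrightarrow> ?W (p(x \<mapsto> c)) True)"
      by (rule all_move_iff_all_box_move[where Q = "\<lambda>p'. ?W p' True"]) (use z0 outside in auto)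
    ultimately show ?thesis
      by (simp only: wins_within.simps(2) conj_assoc)
  qed
  finally show ?case .
qed

section \<open>Computable functions\<close>

definition computable :: "nat \<Rightarrow> (nat list \<Rightarrow> nat) \<Rightarrow> bool" where
  "computable n F \<longleftrightarrow> (\<exists>f. \<forall>xs. length xs = n \<longrightarrow> eval f xs (F xs))"

abbreviation computable_pred :: "nat \<Rightarrow> (nat list \<Rightarrow> bool) \<Rightarrow> bool" where
  "computable_pred n P \<equiv> computable n (\<lambda>xs. of_bool (P xs))"

lemma decidableI: "computable_pred 1 (\<lambda>xs. P (xs ! 0)) \<Longrightarrow> decidable P"
  unfolding computable_def decidable_def
  by (metis length_Cons list.size(3) nth_Cons_0 of_bool_def One_nat_def)

lemma computable_cong:
  "computable n F \<Longrightarrow> (\<And>xs. length xs = n \<Longrightarrow> F xs = G xs) \<Longrightarrow> computable n G"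
  unfolding computable_def by metis

lemma computable_proj: "i < n \<Longrightarrow> computable n (\<lambda>xs. xs ! i)"
  unfolding computable_def by (auto intro: eval.proj)

lemma computable_compose:
  assumes G: "computable m G" and len: "length Fs = m" and Fs: "\<forall>F\<in>set Fs. computable n F"
  shows "computable n (\<lambda>xs. G (map (\<lambda>F. F xs) Fs))"
proof -
  obtain g where g: "\<forall>ys. length ys = m \<longrightarrow> eval g ys (G ys)"
    using G unfolding computable_def by blast
  obtain h where h: "\<forall>F\<in>set Fs. \<forall>xs. length xs = n \<longrightarrow> eval (h F) xs (F xs)"
    using bchoice[OF Fs[unfolded computable_def]] by blast
  have "eval (Comp g (map h Fs)) xs (G (map (\<lambda>F. F xs) Fs))" if "length xs = n" for xs
  proof (rule eval.comp)
    show "list_all2 (\<lambda>g y. eval g xs y) (map h Fs) (map (\<lambda>F. F xs) Fs)"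
      using h that by (auto simp: list_all2_map1 list_all2_map2 intro: list.rel_refl_strong)
  qed (use g len in simp)
  then show ?thesis unfolding computable_def by blast
qed

lemma computable_compose1: "computable 1 G \<Longrightarrow> computable n A \<Longrightarrow> computable n (\<lambda>xs. G [A xs])"
  using computable_compose[of 1 G "[A]" n] by simp

lemma computable_compose2:
  "computable 2 G \<Longrightarrow> computable n A \<Longrightarrow> computable n B \<Longrightarrow> computable n (\<lambda>xs. G [A xs, B xs])"
  using computable_compose[of 2 G "[A, B]" n] by simp

lemma computable_compose3:
  "computable 3 G \<Longrightarrow> computable n A \<Longrightarrow> computable n B \<Longrightarrow> computable n C \<Longrightarrow>
   computable n (\<lambda>xs. G [A xs, B xs, C xs])"
  using computable_compose[of 3 G "[A, B, C]" n] by simp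

lemma computable_compose4:
  "computable 4 G \<Longrightarrow> computable n A \<Longrightarrow> computable n B \<Longrightarrow> computable n C \<Longrightarrow> computable n D \<Longrightarrow>
   computable n (\<lambda>xs. G [A xs, B xs, C xs, D xs])"
  using computable_compose[of 4 G "[A, B, C, D]" n] by simp

lemma computable_Suc: "computable n A \<Longrightarrow> computable n (\<lambda>xs. Suc (A xs))"
proof -
  have "computable 1 (\<lambda>xs. Suc (xs ! 0))"
    unfolding computable_def by (auto simp: length_Suc_conv intro!: exI[of _ Succ] eval.succ)
  then show "computable n A \<Longrightarrow> computable n (\<lambda>xs. Suc (A xs))"
    using computable_compose1 by fastforce
qed

lemma computable_const: "computable n (\<lambda>xs. k)"
proof (induction k)
  case 0
  then show ?case unfolding computable_def by (auto intro: eval.zero)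
qed (rule computable_Suc)

text \<open>Primitive recursion, with the bound variable and the accumulator passed as the
  first two arguments of the step function.\<close>

lemma computable_rec_nat:
  assumes N: "computable n N" and I: "computable n I"
    and S: "computable (Suc (Suc n)) (\<lambda>ys. S (ys ! 0) (ys ! 1) (drop 2 ys))"
  shows "computable n (\<lambda>xs. rec_nat (I xs) (\<lambda>k a. S k a xs) (N xs))"
proof -
  obtain f where f: "\<forall>xs. length xs = n \<longrightarrow> eval f xs (I xs)"
    using I unfolding computable_def by blast
  obtain g where g: "\<forall>ys. length ys = Suc (Suc n) \<longrightarrow> eval g ys (S (ys ! 0) (ys ! 1) (drop 2 ys))"
    using S unfolding computable_def by blast
  have prec: "eval (Prec f g) (k # xs) (rec_nat (I xs) (\<lambda>k a. S k a xs) k)" if "length xs = n" for k xs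
  proof (induction k)
    case 0
    show ?case using f that by (auto intro: eval.prec0)
  next
    case (Suc k)
    show ?case
      by (rule eval.precS[OF Suc]) (use g[rule_format, of "k # _ # xs"] that in simp)
  qed
  have "computable (Suc n) (\<lambda>ys. rec_nat (I (tl ys)) (\<lambda>k a. S k a (tl ys)) (hd ys))"
    unfolding computable_def by (rule exI[of _ "Prec f g"]) (auto simp: length_Suc_conv intro: prec)
  then have "computable n (\<lambda>xs. (\<lambda>ys. rec_nat (I (tl ys)) (\<lambda>k a. S k a (tl ys)) (hd ys))
      (map (\<lambda>F. F xs) (N # map (\<lambda>i xs. xs ! i) [0..<n])))"
    by (rule computable_compose) (auto intro: N computable_proj)
  then show ?thesis
  proof (rule computable_cong)
    fix xs :: "nat list"
    assume "length xs = n"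
    then have "map ((\<lambda>F. F xs) \<circ> (\<lambda>i xs. xs ! i)) [0..<n] = xs"
      using map_nth[of xs] by (simp add: o_def)
    then show "(\<lambda>ys. rec_nat (I (tl ys)) (\<lambda>k a. S k a (tl ys)) (hd ys)) (map (\<lambda>F. F xs)
        (N # map (\<lambda>i xs. xs ! i) [0..<n])) = rec_nat (I xs) (\<lambda>k a. S k a xs) (N xs)"
      by simp
  qed
qed

lemma computable_drop:
  assumes "computable n A"
  shows "computable (k + n) (\<lambda>xs. A (drop k xs))"
proof -
  have "computable (k + n) (\<lambda>xs. A (map (\<lambda>F. F xs) (map (\<lambda>i xs. xs ! (k + i)) [0..<n])))"
    by (rule computable_compose[OF assms]) (auto intro: computable_proj)
  then show ?thesis
    by (rule computable_cong) (auto intro!: arg_cong[where f = A] nth_equalityI)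
qed

lemma computable_nth_drop: "k + i < n \<Longrightarrow> computable n (\<lambda>xs. drop k xs ! i)"
  by (rule computable_cong[OF computable_proj[of "k + i" n]]) auto

lemma computable_drop1: "computable n A \<Longrightarrow> computable (Suc n) (\<lambda>xs. A (drop 1 xs))"
  using computable_drop[of n A 1] by simp

lemma computable_drop_second:
  assumes "computable (Suc n) (\<lambda>ys. F (ys ! 0) (drop 1 ys))"
  shows "computable (Suc (Suc n)) (\<lambda>ys. F (ys ! 0) (drop 2 ys))"
proof -
  have "computable (Suc (Suc n))
      (\<lambda>ys. (\<lambda>ys. F (ys ! 0) (drop 1 ys)) (map (\<lambda>F. F ys) ((\<lambda>ys. ys ! 0) # map (\<lambda>i ys. ys ! (i + 2)) [0..<n])))"
    by (rule computable_compose[OF assms]) (auto intro: computable_proj)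
  then show ?thesis
    by (rule computable_cong) (auto intro!: arg_cong[where f = "F _"] nth_equalityI)
qed

lemma rec_nat_Suc_eq_add: "rec_nat a (\<lambda>k x. Suc x) m = a + m"
  by (induction m) auto

lemma rec_nat_add_eq_mult: "rec_nat 0 (\<lambda>k x. x + c) m = m * c"
  by (induction m) auto

lemma rec_nat_pred: "rec_nat 0 (\<lambda>k x. k) m = m - 1"
  by (induction m) auto

lemma rec_nat_diff: "rec_nat a (\<lambda>k x. x - Suc 0) m = a - m"
  by (induction m) auto

lemma rec_nat_sum: "rec_nat 0 (\<lambda>k x. x + F k) m = (\<Sum>k<m. F k)"
  by (induction m) auto

lemma rec_nat_power: "rec_nat (Suc 0) (\<lambda>k x. x * c) m = c ^ m"
  by (induction m) (simp_all add: mult.commute)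

lemma computable_add: "computable n A \<Longrightarrow> computable n B \<Longrightarrow> computable n (\<lambda>xs. A xs + B xs)"
proof -
  have "computable 2 (\<lambda>xs. rec_nat (xs ! 1) (\<lambda>k a. (\<lambda>k a w. Suc a) k a xs) (xs ! 0))"
    by (rule computable_rec_nat) (auto intro!: computable_proj computable_Suc)
  then have "computable 2 (\<lambda>xs. xs ! 0 + xs ! 1)"
    by (rule computable_cong) (simp add: rec_nat_Suc_eq_add)
  then show "computable n A \<Longrightarrow> computable n B \<Longrightarrow> computable n (\<lambda>xs. A xs + B xs)"
    using computable_compose2 by fastforce
qed

lemma computable_mult: "computable n A \<Longrightarrow> computable n B \<Longrightarrow> computable n (\<lambda>xs. A xs * B xs)"
proof -
  have "computable 2 (\<lambda>xs. rec_nat 0 (\<lambda>k a. (\<lambda>k a w. a + w ! 1) k a xs) (xs ! 0))"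
    by (rule computable_rec_nat)
       (auto intro!: computable_proj computable_const computable_add computable_nth_drop[of 2 1, simplified])
  then have "computable 2 (\<lambda>xs. xs ! 0 * xs ! 1)"
    by (rule computable_cong) (simp add: rec_nat_add_eq_mult)
  then show "computable n A \<Longrightarrow> computable n B \<Longrightarrow> computable n (\<lambda>xs. A xs * B xs)"
    using computable_compose2 by fastforce
qed

lemma computable_diff: "computable n A \<Longrightarrow> computable n B \<Longrightarrow> computable n (\<lambda>xs. A xs - B xs)"
proof -
  have "computable 1 (\<lambda>xs. rec_nat 0 (\<lambda>k a. (\<lambda>k a w. k) k a xs) (xs ! 0))"
    by (rule computable_rec_nat) (auto intro!: computable_proj computable_const)
  then have pred: "computable 1 (\<lambda>xs. xs ! 0 - 1)"
    by (rule computable_cong) (simp add: rec_nat_pred)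
  have "computable 2 (\<lambda>xs. rec_nat (xs ! 0) (\<lambda>k a. (\<lambda>k a w. a - 1) k a xs) (xs ! 1))"
    by (rule computable_rec_nat) (auto intro!: computable_proj computable_compose1[OF pred, simplified])
  then have "computable 2 (\<lambda>xs. xs ! 0 - xs ! 1)"
    by (rule computable_cong) (simp add: rec_nat_diff)
  then show "computable n A \<Longrightarrow> computable n B \<Longrightarrow> computable n (\<lambda>xs. A xs - B xs)"
    using computable_compose2 by fastforce
qed

lemma computable_sum:
  assumes "computable n B" "computable (Suc n) (\<lambda>ys. F (ys ! 0) (drop 1 ys))"
  shows "computable n (\<lambda>xs. \<Sum>k<B xs. F k xs)"
proof -
  have "computable n (\<lambda>xs. rec_nat 0 (\<lambda>k a. (\<lambda>k a w. a + F k w) k a xs) (B xs))"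
    by (rule computable_rec_nat)
       (auto intro!: assms(1) computable_const computable_add computable_proj computable_drop_second[OF assms(2)])
  then show ?thesis
    by (rule computable_cong) (simp add: rec_nat_sum)
qed

lemma computable_pow: "computable n A \<Longrightarrow> computable n B \<Longrightarrow> computable n (\<lambda>xs. A xs ^ B xs)"
proof -
  assume A: "computable n A" and B: "computable n B"
  have "computable n (\<lambda>xs. rec_nat 1 (\<lambda>k x. (\<lambda>k x w. x * A w) k x xs) (B xs))"
    by (rule computable_rec_nat)
       (auto intro!: B computable_const computable_mult computable_proj computable_drop[of n A 2, simplified] A)
  then show ?thesis
    by (rule computable_cong) (simp add: rec_nat_power)
qed

lemma computable_pred_le: "computable n A \<Longrightarrow> computable n B \<Longrightarrow> computable_pred n (\<lambda>xs. A xs \<le> B xs)"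
  by (rule computable_cong[of n "\<lambda>xs. 1 - (A xs - B xs)"]) (auto intro!: computable_diff computable_const)

lemma computable_pred_less: "computable n A \<Longrightarrow> computable n B \<Longrightarrow> computable_pred n (\<lambda>xs. A xs < B xs)"
  by (rule computable_cong[of n "\<lambda>xs. 1 - (Suc (A xs) - B xs)"])
     (auto intro!: computable_diff computable_Suc computable_const)

lemma computable_pred_eq: "computable n A \<Longrightarrow> computable n B \<Longrightarrow> computable_pred n (\<lambda>xs. A xs = B xs)"
  by (rule computable_cong[of n "\<lambda>xs. 1 - ((A xs - B xs) + (B xs - A xs))"])
     (auto intro!: computable_diff computable_add computable_const)

lemma computable_pred_not: "computable_pred n P \<Longrightarrow> computable_pred n (\<lambda>xs. \<not> P xs)"
  by (rule computable_cong[of n "\<lambda>xs. 1 - of_bool (P xs)"]) (auto intro!: computable_diff computable_const)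

lemma computable_pred_conj:
  "computable_pred n P \<Longrightarrow> computable_pred n Q \<Longrightarrow> computable_pred n (\<lambda>xs. P xs \<and> Q xs)"
  by (rule computable_cong[of n "\<lambda>xs. of_bool (P xs) * of_bool (Q xs)"]) (auto intro!: computable_mult)

lemma computable_pred_disj:
  "computable_pred n P \<Longrightarrow> computable_pred n Q \<Longrightarrow> computable_pred n (\<lambda>xs. P xs \<or> Q xs)"
  using computable_pred_not[OF computable_pred_conj[OF computable_pred_not computable_pred_not]] by simp

lemma computable_pred_imp:
  "computable_pred n P \<Longrightarrow> computable_pred n Q \<Longrightarrow> computable_pred n (\<lambda>xs. P xs \<longrightarrow> Q xs)"
  using computable_pred_disj[OF computable_pred_not] by simp

lemma computable_if:
  "computable_pred n P \<Longrightarrow> computable n A \<Longrightarrow> computable n B \<Longrightarrow>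
   computable n (\<lambda>xs. if P xs then A xs else B xs)"
  by (rule computable_cong[of n "\<lambda>xs. of_bool (P xs) * A xs + (1 - of_bool (P xs)) * B xs"])
     (auto intro!: computable_add computable_mult computable_diff computable_const)

lemma computable_pred_if:
  "computable_pred n C \<Longrightarrow> computable_pred n P \<Longrightarrow> computable_pred n Q \<Longrightarrow>
   computable_pred n (\<lambda>xs. if C xs then P xs else Q xs)"
  by (rule computable_cong[OF computable_if[of n C "\<lambda>xs. of_bool (P xs)" "\<lambda>xs. of_bool (Q xs)"]]) auto

lemma computable_pred_bex:
  assumes "computable n B" "computable_pred (Suc n) (\<lambda>ys. P (ys ! 0) (drop 1 ys))"
  shows "computable_pred n (\<lambda>xs. \<exists>k<B xs. P k xs)"
proof -
  have "computable n (\<lambda>xs. 1 - (1 - (\<Sum>k<B xs. of_bool (P k xs))))"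
    by (intro computable_diff computable_const computable_sum assms)
  moreover have "1 - (1 - (\<Sum>k<m. of_bool (P k xs))) = (of_bool (\<exists>k<m. P k xs) :: nat)" for m xs
  proof -
    show ?thesis
    proof (cases "\<exists>k<m. P k xs")
      case True
      then obtain k where "k < m" "P k xs" by blast
      then have "of_bool (P k xs) \<le> (\<Sum>k<m. of_bool (P k xs) :: nat)"
        by (intro member_le_sum) auto
      then show ?thesis using True \<open>P k xs\<close> by auto
    qed auto
  qed
  ultimately show ?thesis
    by (rule computable_cong)
qed

lemma computable_pred_ball:
  assumes "computable n B" "computable_pred (Suc n) (\<lambda>ys. P (ys ! 0) (drop 1 ys))"
  shows "computable_pred n (\<lambda>xs. \<forall>k<B xs. P k xs)"
  using computable_pred_not[OF computable_pred_bex[OF assms(1) computable_pred_not[OF assms(2)]]] by simp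

lemma computable_div: "computable n A \<Longrightarrow> computable n B \<Longrightarrow> computable n (\<lambda>xs. A xs div B xs)"
proof -
  assume A: "computable n A" and B: "computable n B"
  have "computable n (\<lambda>xs. \<Sum>k<A xs. of_bool (0 < B xs \<and> Suc k * B xs \<le> A xs))"
    by (intro computable_sum A computable_pred_conj computable_pred_less computable_pred_le computable_mult
        computable_Suc computable_proj computable_const computable_drop1 B) auto
  moreover have "(\<Sum>k<a. of_bool (0 < b \<and> Suc k * b \<le> a)) = a div b" for a b :: nat
  proof (cases "b = 0")
    case False
    have "k < a \<and> Suc k * b \<le> a \<longleftrightarrow> k < a div b" for k
    proof -
      have "Suc k * b \<le> a \<longleftrightarrow> Suc k \<le> a div b"
        using False by (simp add: less_eq_div_iff_mult_less_eq)
      then show ?thesis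
        by (auto simp: Suc_le_eq dest: order.strict_trans2[OF _ div_le_dividend])
    qed
    then have "{..<a} \<inter> {k. Suc k * b \<le> a} = {..<a div b}"
      by auto
    then show ?thesis using False by (simp add: sum.If_cases)
  qed simp
  ultimately show ?thesis by (rule computable_cong)
qed

lemma computable_mod: "computable n A \<Longrightarrow> computable n B \<Longrightarrow> computable n (\<lambda>xs. A xs mod B xs)"
  by (rule computable_cong[of n "\<lambda>xs. A xs - B xs * (A xs div B xs)"])
     (auto intro!: computable_diff computable_mult computable_div simp: minus_div_mult_eq_mod[symmetric] mult.commute)

lemma computable_pred_even: "computable n A \<Longrightarrow> computable_pred n (\<lambda>xs. even (A xs))"
  by (rule computable_cong[of n "\<lambda>xs. 1 - A xs mod 2"])
     (auto intro!: computable_diff computable_mod computable_const simp: odd_iff_mod_2_eq_one)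

section \<open>Codes of pairs, lists, integers and sets\<close>

lemma prod_decode_eq_sum:
  fixes g :: "nat \<times> nat \<Rightarrow> nat"
  shows "g (prod_decode n) = (\<Sum>a\<le>n. \<Sum>b\<le>n. of_bool (prod_encode (a, b) = n) * g (a, b))"
proof -
  obtain a0 b0 where ab: "prod_decode n = (a0, b0)" by fastforce
  then have n: "n = prod_encode (a0, b0)" by (metis prod_decode_inverse)
  have le: "a0 \<le> n" "b0 \<le> n" using n le_prod_encode_1 le_prod_encode_2 by metis+
  have "(\<Sum>a\<le>n. \<Sum>b\<le>n. of_bool (prod_encode (a, b) = n) * g (a, b))
      = (\<Sum>a\<le>n. if a = a0 then (\<Sum>b\<le>n. if b = b0 then g (a0, b0) else 0) else 0)"
    by (intro sum.cong) (auto simp: n)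
  also have "\<dots> = g (a0, b0)" using le by simp
  finally show ?thesis by (simp add: ab)
qed

lemma computable_prod_encode:
  "computable n A \<Longrightarrow> computable n B \<Longrightarrow> computable n (\<lambda>xs. prod_encode (A xs, B xs))"
  unfolding prod_encode_def triangle_def
  by (simp, intro computable_add computable_div computable_mult computable_Suc computable_const)

lemma computable_prod_decode_apply:
  assumes g: "computable 2 (\<lambda>ys. g (ys ! 0, ys ! 1))" and A: "computable n A"
  shows "computable n (\<lambda>xs. g (prod_decode (A xs)))"
proof -
  have "computable 1 (\<lambda>ys. \<Sum>a<Suc (ys ! 0). \<Sum>b<Suc (ys ! 0).
      of_bool (prod_encode (a, b) = ys ! 0) * g (a, b))"
    by (intro computable_sum computable_Suc computable_proj computable_mult computable_pred_eq
        computable_prod_encode computable_nth_drop computable_drop1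
        computable_compose2[OF g, simplified]) auto
  then have "computable 1 (\<lambda>ys. g (prod_decode (ys ! 0)))"
    by (rule computable_cong) (simp only: prod_decode_eq_sum lessThan_Suc_atMost)
  then show ?thesis
    using computable_compose1[OF _ A] by fastforce
qed

lemma computable_prod_decode:
  assumes "computable n A"
  shows "computable n (\<lambda>xs. fst (prod_decode (A xs)))" "computable n (\<lambda>xs. snd (prod_decode (A xs)))"
  by (intro computable_prod_decode_apply assms; simp add: computable_proj)+

text \<open>Total versions of \<open>tl\<close> and \<open>nth\<close> on codes of lists; \<open>code_nth s i\<close> is a junk value
  unless \<open>i < length (list_decode s)\<close>.\<close>

definition code_tl :: "nat \<Rightarrow> nat" where
  "code_tl s = snd (prod_decode (s - 1))"

definition code_nth :: "nat \<Rightarrow> nat \<Rightarrow> nat" where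
  "code_nth s i = fst (prod_decode ((code_tl ^^ i) s - 1))"

lemma list_decode_code_tl: "list_decode (code_tl s) = tl (list_decode s)"
proof (cases s)
  case 0
  have "prod_decode 0 = (0, 0)" by (simp add: prod_decode_def prod_decode_aux.simps)
  then show ?thesis using 0 by (simp add: code_tl_def)
qed (simp add: code_tl_def split: prod.split)

lemma list_decode_code_tl_funpow: "list_decode ((code_tl ^^ i) s) = drop i (list_decode s)"
  by (induction i) (simp_all add: list_decode_code_tl drop_Suc tl_drop)

lemma code_nth_eq: "i < length (list_decode s) \<Longrightarrow> code_nth s i = list_decode s ! i"
proof -
  assume i: "i < length (list_decode s)"
  obtain m where m: "(code_tl ^^ i) s = Suc m"
    using i list_decode_code_tl_funpow[of i s] by (cases "(code_tl ^^ i) s") auto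
  have "list_decode s ! i = hd (drop i (list_decode s))"
    using i by (simp add: hd_drop_conv_nth)
  also have "\<dots> = hd (list_decode (Suc m))"
    by (simp only: m flip: list_decode_code_tl_funpow)
  finally show ?thesis
    by (simp add: code_nth_def m split: prod.splits)
qed

lemma code_nth_list_encode [simp]: "i < length xs \<Longrightarrow> code_nth (list_encode xs) i = xs ! i"
  using code_nth_eq[of i "list_encode xs"] by simp

lemma length_le_list_encode: "length xs \<le> list_encode xs"
proof (induction xs)
  case (Cons x xs)
  then show ?case using le_prod_encode_2[of "list_encode xs" x] by simp
qed simp

lemma member_less_list_encode: "x \<in> set xs \<Longrightarrow> x < list_encode xs"
proof (induction xs)
  case (Cons y xs)
  then show ?case
    using le_prod_encode_1[of y "list_encode xs"] le_prod_encode_2[of "list_encode xs" y] by fastforce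
qed simp

lemma list_decode_eq_Nil_iff: "list_decode s = [] \<longleftrightarrow> s = 0"
proof
  assume "list_decode s = []"
  then have "list_encode (list_decode s) = 0" by simp
  then show "s = 0" by (simp only: list_decode_inverse)
qed simp

lemma length_list_decode_eq_sum: "length (list_decode s) = (\<Sum>i<s. of_bool ((code_tl ^^ i) s \<noteq> 0))"
proof -
  have "(code_tl ^^ i) s \<noteq> 0 \<longleftrightarrow> i < length (list_decode s)" for i
  proof -
    have "(code_tl ^^ i) s \<noteq> 0 \<longleftrightarrow> drop i (list_decode s) \<noteq> []"
      by (simp only: list_decode_eq_Nil_iff flip: list_decode_code_tl_funpow)
    then show ?thesis by (simp only: drop_eq_Nil not_le)
  qed
  then have "{..<s} \<inter> {i. (code_tl ^^ i) s \<noteq> 0} = {..<s} \<inter> {..<length (list_decode s)}"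
    by blast
  also have "\<dots> = {..<length (list_decode s)}"
    using length_le_list_encode[of "list_decode s"] by (simp add: Int_absorb1)
  finally show ?thesis by (simp add: sum.If_cases)
qed

lemma computable_code_tl_funpow:
  "computable n A \<Longrightarrow> computable n B \<Longrightarrow> computable n (\<lambda>xs. (code_tl ^^ B xs) (A xs))"
proof -
  assume A: "computable n A" and B: "computable n B"
  have rec: "rec_nat a (\<lambda>k a. code_tl a) m = (code_tl ^^ m) a" for a m
    by (induction m) auto
  have "computable n (\<lambda>xs. rec_nat (A xs) (\<lambda>k a. (\<lambda>k a w. code_tl a) k a xs) (B xs))"
    unfolding code_tl_def
    by (intro computable_rec_nat A B computable_prod_decode computable_diff computable_proj computable_const) auto
  then show ?thesis by (simp only: rec)
qed

lemma computable_code_nth: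
  "computable n A \<Longrightarrow> computable n B \<Longrightarrow> computable n (\<lambda>xs. code_nth (A xs) (B xs))"
  unfolding code_nth_def by (intro computable_prod_decode computable_diff computable_code_tl_funpow computable_const)

lemma computable_length_list_decode:
  "computable n A \<Longrightarrow> computable n (\<lambda>xs. length (list_decode (A xs)))"
  unfolding length_list_decode_eq_sum
  by (intro computable_sum computable_pred_not computable_pred_eq computable_code_tl_funpow computable_drop1
      computable_proj computable_const) auto

abbreviation computable_int :: "nat \<Rightarrow> (nat list \<Rightarrow> int) \<Rightarrow> bool" where
  "computable_int n F \<equiv> computable n (\<lambda>xs. int_encode (F xs))"

lemma computable_int_iff:
  "computable_int n F \<longleftrightarrow> computable n (\<lambda>xs. nat (F xs)) \<and> computable n (\<lambda>xs. nat (- F xs))"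
proof
  assume F: "computable_int n F"
  have "nat (int_decode m) = (if even m then m div 2 else 0)"
    "nat (- int_decode m) = (if even m then 0 else Suc (m div 2))" for m
    by (auto simp: int_decode_def sum_decode_def nat_add_distrib)
  then have "nat z = (if even (int_encode z) then int_encode z div 2 else 0)"
    "nat (- z) = (if even (int_encode z) then 0 else Suc (int_encode z div 2))" for z
    by (metis int_encode_inverse)+
  moreover have "computable n (\<lambda>xs. if even (int_encode (F xs)) then int_encode (F xs) div 2 else 0)"
    "computable n (\<lambda>xs. if even (int_encode (F xs)) then 0 else Suc (int_encode (F xs) div 2))"
    by (intro computable_if computable_pred_even computable_div computable_Suc computable_const F)+
  ultimately show "computable n (\<lambda>xs. nat (F xs)) \<and> computable n (\<lambda>xs. nat (- F xs))"
    by (simp only:)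
next
  assume "computable n (\<lambda>xs. nat (F xs)) \<and> computable n (\<lambda>xs. nat (- F xs))"
  then have "computable n (\<lambda>xs. if nat (- F xs) = 0 then 2 * nat (F xs) else 2 * nat (- F xs) - 1)"
    by (intro computable_if computable_pred_eq computable_mult computable_diff computable_const) auto
  moreover have "int_encode z = (if nat (- z) = 0 then 2 * nat z else 2 * nat (- z) - 1)" for z
  proof (cases "0 \<le> z")
    case False
    then have "nat (- z) = Suc (nat (- z - 1))" by simp
    then show ?thesis using False by (simp add: int_encode_def sum_encode_def)
  qed (simp add: int_encode_def sum_encode_def)
  ultimately show "computable_int n F"
    by simp
qed

lemma computable_int_decode: "computable n A \<Longrightarrow> computable_int n (\<lambda>xs. int_decode (A xs))"
  by simp

lemma computable_of_nat: "computable n A \<Longrightarrow> computable_int n (\<lambda>xs. int (A xs))"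
  unfolding computable_int_iff by (simp add: computable_const)

lemma computable_nat: "computable_int n F \<Longrightarrow> computable n (\<lambda>xs. nat (F xs))"
  unfolding computable_int_iff by simp

lemma computable_int_add:
  assumes "computable_int n F" "computable_int n G"
  shows "computable_int n (\<lambda>xs. F xs + G xs)"
proof -
  have "nat (a + b) = (nat a + nat b) - (nat (- a) + nat (- b))"
    "nat (- (a + b)) = (nat (- a) + nat (- b)) - (nat a + nat b)" for a b :: int
    by linarith+
  moreover have "computable n (\<lambda>xs. (nat (F xs) + nat (G xs)) - (nat (- F xs) + nat (- G xs)))"
    "computable n (\<lambda>xs. (nat (- F xs) + nat (- G xs)) - (nat (F xs) + nat (G xs)))"
    using assms unfolding computable_int_iff by (intro computable_diff computable_add; simp)+
  ultimately show ?thesis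
    unfolding computable_int_iff by simp
qed

lemma computable_int_minus: "computable_int n F \<Longrightarrow> computable_int n (\<lambda>xs. - F xs)"
  unfolding computable_int_iff by simp

lemma computable_int_diff:
  "computable_int n F \<Longrightarrow> computable_int n G \<Longrightarrow> computable_int n (\<lambda>xs. F xs - G xs)"
  using computable_int_add[OF _ computable_int_minus] by simp

lemma computable_int_abs: "computable_int n F \<Longrightarrow> computable_int n (\<lambda>xs. \<bar>F xs\<bar>)"
  unfolding computable_int_iff
  by (rule conjI, rule computable_cong[OF computable_add[of n "\<lambda>xs. nat (F xs)" "\<lambda>xs. nat (- F xs)"]])
     (auto intro: computable_const)

lemma computable_pred_int_le:
  assumes "computable_int n F" "computable_int n G"
  shows "computable_pred n (\<lambda>xs. F xs \<le> G xs)"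
proof -
  have "computable_pred n (\<lambda>xs. nat (F xs - G xs) = 0)"
    by (intro computable_pred_eq computable_nat computable_int_diff computable_const assms)
  then show ?thesis by simp
qed

lemma set_encode_eq_sum: "set_encode {k. k < m \<and> P k} = (\<Sum>k<m. of_bool (P k) * 2 ^ k)"
proof -
  have "{k. k < m \<and> P k} = {..<m} \<inter> {k. P k}" by auto
  then show ?thesis by (simp add: set_encode_def sum.If_cases)
qed

lemma computable_set_encode:
  assumes "computable n B" "computable_pred (Suc n) (\<lambda>ys. P (ys ! 0) (drop 1 ys))"
  shows "computable n (\<lambda>xs. set_encode {k. k < B xs \<and> P k xs})"
  unfolding set_encode_eq_sum
  by (intro computable_sum computable_mult computable_pow computable_const computable_proj assms) auto

lemma computable_pred_in_set_decode:
  "computable n A \<Longrightarrow> computable n B \<Longrightarrow> computable_pred n (\<lambda>xs. A xs \<in> set_decode (B xs))"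
  unfolding set_decode_def
  by (simp, intro computable_pred_not computable_pred_even computable_div computable_pow computable_const)

section \<open>Positions in a box as numbers\<close>

definition digit :: "nat \<Rightarrow> nat \<Rightarrow> nat \<Rightarrow> nat" where
  "digit b P i = P div b ^ i mod b"

lemma digit_less: "0 < b \<Longrightarrow> digit b P i < b"
  by (simp add: digit_def)

lemma mod_power_eq_sum_digits: "P mod (b::nat) ^ N = (\<Sum>i<N. digit b P i * b ^ i)"
proof (induction N)
  case (Suc N)
  have "P mod (b ^ N * b) = b ^ N * (P div b ^ N mod b) + P mod b ^ N"
    by (rule mod_mult2_eq)
  then show ?case using Suc by (simp add: digit_def mult.commute)
qed simp

lemma eq_sum_digits: "P < (b::nat) ^ N \<Longrightarrow> P = (\<Sum>i<N. digit b P i * b ^ i)"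
  using mod_power_eq_sum_digits[of P b N] by simp

lemma sum_digits_less:
  fixes b :: nat
  assumes "0 < b" "\<forall>i<N. f i < b"
  shows "(\<Sum>i<N. f i * b ^ i) < b ^ N"
  using assms(2)
proof (induction N)
  case (Suc N)
  have "(\<Sum>i<N. f i * b ^ i) < b ^ N" using Suc.prems by (intro Suc.IH) simp
  then have "(\<Sum>i<Suc N. f i * b ^ i) < b ^ N + f N * b ^ N" by simp
  also have "\<dots> = Suc (f N) * b ^ N" by simp
  also have "\<dots> \<le> b * b ^ N" using Suc.prems by (intro mult_right_mono) auto
  finally show ?case by simp
qed simp

lemma digit_sum_digits:
  fixes b :: nat
  assumes b: "0 < b" and f: "\<forall>i<N. f i < b" and s: "s < N"
  shows "digit b (\<Sum>i<N. f i * b ^ i) s = f s"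
  using f s
proof (induction N)
  case (Suc N)
  have S: "(\<Sum>i<Suc N. f i * b ^ i) = (\<Sum>i<N. f i * b ^ i) + f N * b ^ N" by simp
  show ?case
  proof (cases "s < N")
    case True
    text \<open>The top digit \<open>f N\<close> contributes a multiple of \<open>b ^ Suc s\<close>.\<close>
    have e: "f N * b ^ N = (f N * b ^ (N - Suc s)) * b * b ^ s"
      using True by (simp flip: power_add power_Suc add: mult_ac)
    have "digit b (\<Sum>i<Suc N. f i * b ^ i) s = digit b (\<Sum>i<N. f i * b ^ i) s"
      unfolding digit_def S e using b by simp
    then show ?thesis using Suc True by simp
  next
    case False
    then have sN: "s = N" using Suc by simp
    have "(\<Sum>i<N. f i * b ^ i) < b ^ N" using Suc.prems by (intro sum_digits_less b) simp
    then have "(\<Sum>i<Suc N. f i * b ^ i) div b ^ N = f N"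
      unfolding S using b by simp
    then show ?thesis using sN Suc.prems by (simp add: digit_def)
  qed
qed simp

lemma digit_add_power:
  fixes b :: nat
  assumes b: "0 < b" and P: "P < b ^ N" and i: "i < N" and z: "digit b P i = 0" and c: "c < b"
  shows "P + c * b ^ i < b ^ N" "s < N \<Longrightarrow> digit b (P + c * b ^ i) s = (if s = i then c else digit b P s)"
proof -
  let ?f = "(\<lambda>k. digit b P k)(i := c)"
  have "(\<Sum>k<N. ?f k * b ^ k) = (\<Sum>k<N. digit b P k * b ^ k) - digit b P i * b ^ i + c * b ^ i"
    using i by (simp add: sum.remove[of "{..<N}" i])
  also have "\<dots> = P + c * b ^ i" using eq_sum_digits[OF P] z by simp
  finally have eq: "(\<Sum>k<N. ?f k * b ^ k) = P + c * b ^ i" .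
  have f: "\<forall>k<N. ?f k < b" using digit_less[OF b] c by auto
  show "P + c * b ^ i < b ^ N" using sum_digits_less[OF b f] eq by simp
  show "digit b (P + c * b ^ i) s = (if s = i then c else digit b P s)" if "s < N"
    using digit_sum_digits[OF b f that] eq by simp
qed

text \<open>The cells of the box of radius \<open>R\<close> are numbered by reading their shifted coordinates
  \<open>x ! t + R \<in> {0..2R}\<close> as digits in base \<open>2R + 1\<close>.\<close>

definition box_cell :: "nat \<Rightarrow> nat \<Rightarrow> nat \<Rightarrow> cell" where
  "box_cell d R i = map (\<lambda>t. int (digit (2 * R + 1) i t) - int R) [0..<d]"

definition box_index :: "nat \<Rightarrow> nat \<Rightarrow> cell \<Rightarrow> nat" where
  "box_index d R x = (\<Sum>t<d. nat (x ! t + int R) * (2 * R + 1) ^ t)"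

lemma box_index_less: "in_box d (int R) x \<Longrightarrow> box_index d R x < (2 * R + 1) ^ d"
  unfolding box_index_def in_box_def by (intro sum_digits_less) auto

lemma digit_box_index: "in_box d (int R) x \<Longrightarrow> t < d \<Longrightarrow> digit (2 * R + 1) (box_index d R x) t = nat (x ! t + int R)"
  unfolding box_index_def in_box_def by (intro digit_sum_digits) auto

lemma box_cell_box_index: "in_box d (int R) x \<Longrightarrow> box_cell d R (box_index d R x) = x"
  using digit_box_index[of d R x] unfolding box_cell_def in_box_def
  by (intro nth_equalityI) auto

lemma box_index_box_cell: "i < (2 * R + 1) ^ d \<Longrightarrow> box_index d R (box_cell d R i) = i"
  unfolding box_index_def box_cell_def using eq_sum_digits[of i "2 * R + 1" d] by simp

lemma in_box_box_cell: "in_box d (int R) (box_cell d R i)"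
proof -
  have h: "digit (2 * R + 1) i t < 2 * R + 1" for t by (rule digit_less) simp
  have "\<bar>int (digit (2 * R + 1) i t) - int R\<bar> \<le> int R" for t
    using h[of t] by linarith
  then show ?thesis unfolding in_box_def box_cell_def by simp
qed

text \<open>A position inside the box is coded by its digits in base \<open>length Al + 1\<close>, one for each
  cell: \<open>0\<close> for an empty cell and \<open>j + 1\<close> for the colour \<open>Al ! j\<close>.\<close>

definition box_position :: "nat \<Rightarrow> nat \<Rightarrow> nat list \<Rightarrow> nat \<Rightarrow> position" where
  "box_position d R Al P x =
     (if in_box d (int R) x \<and> digit (Suc (length Al)) P (box_index d R x) \<noteq> 0
      then Some (Al ! (digit (Suc (length Al)) P (box_index d R x) - 1)) else None)"

lemma box_position_0: "box_position d R Al 0 = Map.empty"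
  by (rule ext) (simp add: box_position_def digit_def)

lemma dom_box_position: "x \<in> dom (box_position d R Al P) \<Longrightarrow> in_box d (int R) x"
  by (auto simp: box_position_def split: if_splits)

lemma box_position_add:
  assumes P: "P < Suc (length Al) ^ (2 * R + 1) ^ d" and i: "i < (2 * R + 1) ^ d"
    and z: "digit (Suc (length Al)) P i = 0" and j: "j < length Al"
  shows "P + Suc j * Suc (length Al) ^ i < Suc (length Al) ^ (2 * R + 1) ^ d"
    "box_position d R Al (P + Suc j * Suc (length Al) ^ i) = (box_position d R Al P)(box_cell d R i \<mapsto> Al ! j)"
proof -
  let ?B = "Suc (length Al)"
  note add = digit_add_power[of ?B P "(2 * R + 1) ^ d" i "Suc j"]
  show "P + Suc j * ?B ^ i < ?B ^ (2 * R + 1) ^ d"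
    using add P i z j by simp
  show "box_position d R Al (P + Suc j * ?B ^ i) = (box_position d R Al P)(box_cell d R i \<mapsto> Al ! j)"
  proof
    fix x
    show "box_position d R Al (P + Suc j * ?B ^ i) x = ((box_position d R Al P)(box_cell d R i \<mapsto> Al ! j)) x"
    proof (cases "in_box d (int R) x")
      case True
      have eq: "box_index d R x = i \<longleftrightarrow> x = box_cell d R i"
        using box_cell_box_index[OF True] box_index_box_cell[OF i] by auto
      have "digit ?B (P + Suc j * ?B ^ i) (box_index d R x) =
          (if box_index d R x = i then Suc j else digit ?B P (box_index d R x))"
        by (rule add(2)) (use P i z j box_index_less[OF True] in simp_all)
      then show ?thesis
        using True eq by (cases "box_index d R x = i") (simp_all add: box_position_def)
    next
      case False
      then have "x \<noteq> box_cell d R i" using in_box_box_cell by metis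
      then show ?thesis using False by (simp add: box_position_def)
    qed
  qed
qed

lemma ex_box_move_iff_ex_digit:
  assumes P: "P < Suc (length Al) ^ (2 * R + 1) ^ d" and r: "r \<le> int R"
    and inb: "\<And>i. i < (2 * R + 1) ^ d \<Longrightarrow> inb i \<longleftrightarrow> in_box d r (box_cell d R i)"
    and Q: "\<And>P'. P' < Suc (length Al) ^ (2 * R + 1) ^ d \<Longrightarrow> Q' P' \<longleftrightarrow> Q (box_position d R Al P')"
  shows "(\<exists>x c. in_box d r x \<and> box_position d R Al P x = None \<and> c \<in> set Al \<and>
      Q ((box_position d R Al P)(x \<mapsto> c))) \<longleftrightarrow>
    (\<exists>i<(2 * R + 1) ^ d. inb i \<and> digit (Suc (length Al)) P i = 0 \<and>
      (\<exists>j<length Al. Q' (P + Suc j * Suc (length Al) ^ i)))"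
  (is "?moves \<longleftrightarrow> ?digits")
proof
  assume ?moves
  then obtain x c where xc: "in_box d r x" "box_position d R Al P x = None" "c \<in> set Al"
    "Q ((box_position d R Al P)(x \<mapsto> c))" by blast
  have x: "in_box d (int R) x" using in_box_mono[OF xc(1) r] .
  define i where "i = box_index d R x"
  have i: "i < (2 * R + 1) ^ d" "box_cell d R i = x"
    using box_index_less[OF x] box_cell_box_index[OF x] by (simp_all add: i_def)
  obtain j where j: "j < length Al" "Al ! j = c" using xc(3) by (metis in_set_conv_nth)
  have "digit (Suc (length Al)) P i = 0"
    using xc(2) x by (simp add: box_position_def i_def split: if_splits)
  moreover from this have "Q' (P + Suc j * Suc (length Al) ^ i)"
    using box_position_add[OF P i(1) _ j(1)] Q xc(4) i(2) j(2) by simp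
  ultimately show ?digits using i inb xc(1) j(1) by blast
next
  assume ?digits
  then obtain i j where ij: "i < (2 * R + 1) ^ d" "inb i" "digit (Suc (length Al)) P i = 0" "j < length Al"
    "Q' (P + Suc j * Suc (length Al) ^ i)"
    by blast
  have "box_position d R Al P (box_cell d R i) = None"
    using ij(3) box_index_box_cell[OF ij(1)] by (simp add: box_position_def)
  moreover have "Q ((box_position d R Al P)(box_cell d R i \<mapsto> Al ! j))"
    using ij(5) box_position_add[OF P ij(1,3,4)] Q by simp
  ultimately show ?moves using ij(1,2,4) inb nth_mem by blast
qed

text \<open>One step of backward induction: from the set \<open>S\<close> of codes of positions won after the next
  move to those won now, when \<open>Suc n\<close> moves remain. Player \<open>A\<close> is to move if and only if
  \<open>T - Suc n\<close> is even; \<open>fin\<close> decides \<open>final\<close>, and \<open>inb k i\<close> tells whether the cell number \<open>i\<close>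
  lies in the box of radius \<open>r k\<close>.\<close>

definition win_step :: "(nat \<Rightarrow> bool) \<Rightarrow> (nat \<Rightarrow> nat \<Rightarrow> bool) \<Rightarrow> nat \<Rightarrow> nat \<Rightarrow> nat \<Rightarrow> nat \<Rightarrow> nat set \<Rightarrow> nat \<Rightarrow> bool"
  where
  "win_step fin inb K N T n S P \<longleftrightarrow> fin P \<or>
     (if even (T - Suc n)
      then P \<in> S \<or> (\<exists>i<N. inb (Suc n) i \<and> digit (Suc K) P i = 0 \<and> (\<exists>j<K. P + Suc j * Suc K ^ i \<in> S))
      else P \<in> S \<and> (\<forall>i<N. inb (Suc n) i \<longrightarrow> digit (Suc K) P i = 0 \<longrightarrow> (\<forall>j<K. P + Suc j * Suc K ^ i \<in> S)))"

primrec win_table :: "(nat \<Rightarrow> bool) \<Rightarrow> (nat \<Rightarrow> nat \<Rightarrow> bool) \<Rightarrow> nat \<Rightarrow> nat \<Rightarrow> nat \<Rightarrow> nat \<Rightarrow> nat" where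
  "win_table fin inb K N T 0 = set_encode {P. P < Suc K ^ N \<and> fin P}"
| "win_table fin inb K N T (Suc n) =
     set_encode {P. P < Suc K ^ N \<and> win_step fin inb K N T n (set_decode (win_table fin inb K N T n)) P}"

lemma win_table_correct:
  assumes fin: "\<And>P. P < Suc (length Al) ^ (2 * R + 1) ^ d \<Longrightarrow> fin P \<longleftrightarrow> final d F (box_position d R Al P)"
    and inb: "\<And>k i. 1 \<le> k \<Longrightarrow> k \<le> T \<Longrightarrow> inb k i \<longleftrightarrow> in_box d (r k) (box_cell d R i)"
    and r: "\<And>k. 1 \<le> k \<Longrightarrow> r k \<le> int R"
  shows "n \<le> T \<Longrightarrow> P < Suc (length Al) ^ (2 * R + 1) ^ d \<Longrightarrow>
    P \<in> set_decode (win_table fin inb (length Al) ((2 * R + 1) ^ d) T n) \<longleftrightarrow>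
    wins_within_box d Al F r n (box_position d R Al P) (even (T - n))"
proof (induction n arbitrary: P)
  case 0
  then show ?case using fin by simp
next
  case (Suc n)
  let ?S = "set_decode (win_table fin inb (length Al) ((2 * R + 1) ^ d) T n)"
    and ?W = "wins_within_box d Al F r n"
  define a where "a = even (T - Suc n)"
  have "T - n = Suc (T - Suc n)" using Suc.prems(1) by simp
  then have player: "even (T - n) \<longleftrightarrow> \<not> a" by (simp add: a_def)
  have IH: "Q \<in> ?S \<longleftrightarrow> ?W (box_position d R Al Q) (\<not> a)" if "Q < Suc (length Al) ^ (2 * R + 1) ^ d" for Q
    using Suc.IH[OF _ that] Suc.prems(1) player by simp
  have moves: "(\<exists>x c. in_box d (r (Suc n)) x \<and> box_position d R Al P x = None \<and> c \<in> set Al \<and>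
      ?W ((box_position d R Al P)(x \<mapsto> c)) (\<not> a) = v) \<longleftrightarrow>
    (\<exists>i<(2 * R + 1) ^ d. inb (Suc n) i \<and> digit (Suc (length Al)) P i = 0 \<and>
      (\<exists>j<length Al. (P + Suc j * Suc (length Al) ^ i \<in> ?S) = v))" for v
    by (rule ex_box_move_iff_ex_digit) (use Suc.prems r inb IH in auto)
  have "P \<in> set_decode (win_table fin inb (length Al) ((2 * R + 1) ^ d) T (Suc n)) \<longleftrightarrow>
      win_step fin inb (length Al) ((2 * R + 1) ^ d) T n ?S P"
    using Suc.prems(2) by simp
  also have "\<dots> \<longleftrightarrow> wins_within_box d Al F r (Suc n) (box_position d R Al P) a"
    using fin[OF Suc.prems(2)] IH[OF Suc.prems(2)] moves[of True] moves[of False]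
    unfolding win_step_def a_def[symmetric] by (cases a) auto
  finally show ?case unfolding a_def .
qed

lemma appears_box_position_iff:
  assumes q: "\<forall>(j, c)\<in>set q. length j = d"
  shows "appears d q (box_position d R Al P) \<longleftrightarrow> (\<exists>i<(2 * R + 1) ^ d. \<forall>(j, c)\<in>set q.
    box_position d R Al P (map (\<lambda>t. box_cell d R i ! t + j ! t - fst (hd q) ! t) [0..<d]) = Some c)"
    (is "?appears \<longleftrightarrow> (\<exists>i<?N. ?at i)")
proof
  assume ?appears
  then obtain v where v: "length v = d" "\<forall>(j, c)\<in>set q. box_position d R Al P (vadd v j) = Some c"
    unfolding appears_def by blast
  show "\<exists>i<?N. ?at i"
  proof (cases q)
    case Nil
    then show ?thesis by (auto intro: exI[of _ 0])
  next
    case (Cons jc0 q')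
    obtain j0 c0 where jc0: "hd q = (j0, c0)" "(j0, c0) \<in> set q" using Cons by (cases jc0) auto
    have j0: "length j0 = d" using q jc0 by auto
    have "vadd v j0 \<in> dom (box_position d R Al P)" using v(2) jc0 by auto
    then have x0: "in_box d (int R) (vadd v j0)" by (rule dom_box_position)
    define i where "i = box_index d R (vadd v j0)"
    have "map (\<lambda>t. box_cell d R i ! t + j ! t - j0 ! t) [0..<d] = vadd v j" if "length j = d" for j
      using that v(1) j0 box_cell_box_index[OF x0] by (intro nth_equalityI) (auto simp: i_def nth_vadd length_vadd)
    then have "?at i" using v(2) q jc0 by fastforce
    then show ?thesis using box_index_less[OF x0] by (auto simp: i_def)
  qed
next
  assume "\<exists>i<?N. ?at i"
  then obtain i where i: "?at i" by blast
  define v where "v = map (\<lambda>t. box_cell d R i ! t - fst (hd q) ! t) [0..<d]"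
  have vadd: "vadd v j = map (\<lambda>t. box_cell d R i ! t + j ! t - fst (hd q) ! t) [0..<d]"
    if "length j = d" for j
    using that by (intro nth_equalityI) (auto simp: v_def nth_vadd length_vadd)
  show ?appears unfolding appears_def
  proof (intro exI[of _ v] conjI ballI)
    show "length v = d" by (simp add: v_def)
    fix jc assume jc: "jc \<in> set q"
    obtain j c where jcd: "jc = (j, c)" by fastforce
    then have "length j = d" using q jc by auto
    then show "case jc of (j, c) \<Rightarrow> box_position d R Al P (vadd v j) = Some c"
      using i jc jcd vadd by auto
  qed
qed

lemma box_position_eq_Some_iff:
  assumes "length x = d"
  shows "box_position d R Al P x = Some c \<longleftrightarrow> (\<forall>t<d. \<bar>x ! t\<bar> \<le> int R) \<and>
    digit (Suc (length Al)) P (box_index d R x) \<noteq> 0 \<and> Al ! (digit (Suc (length Al)) P (box_index d R x) - 1) = c"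
  using assms by (auto simp: box_position_def in_box_def)

section \<open>Instances as numbers\<close>

definition decode_fpattern :: "nat \<Rightarrow> fpattern" where
  "decode_fpattern n = map (\<lambda>e. (map int_decode (list_decode (fst (prod_decode e))), snd (prod_decode e))) (list_decode n)"

lemma decode_encode_fpattern: "decode_fpattern (encode_fpattern q) = q"
  by (induction q) (auto simp: decode_fpattern_def encode_fpattern_def encode_cell_def o_def)

lemma encode_decode_fpattern: "encode_fpattern (decode_fpattern n) = n"
proof -
  have "map (\<lambda>(v, c). prod_encode (encode_cell v, c)) (decode_fpattern n) = list_decode n"
    unfolding decode_fpattern_def encode_cell_def by (simp add: o_def map_idI)
  then show ?thesis by (simp add: encode_fpattern_def)
qed

lemma encode_instance_eq_iff:
  "encode_instance Al F T = encode_instance Al' F' T' \<longleftrightarrow> Al = Al' \<and> F = F' \<and> T = T'"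
proof -
  have "map encode_fpattern F = map encode_fpattern F' \<longleftrightarrow> F = F'"
    by (metis decode_encode_fpattern list.inj_map_strong)
  then show ?thesis
    by (auto simp: encode_instance_def list_encode_eq)
qed

lemma ex_encode_instance: "\<exists>Al F T. c = encode_instance Al F T"
proof (intro exI)
  let ?F = "map decode_fpattern (list_decode (fst (prod_decode (snd (prod_decode c)))))"
  have "map encode_fpattern ?F = list_decode (fst (prod_decode (snd (prod_decode c))))"
    by (simp add: o_def encode_decode_fpattern)
  then show "c = encode_instance (list_decode (fst (prod_decode c))) ?F (snd (prod_decode (snd (prod_decode c))))"
    unfolding encode_instance_def by simp
qed

lemma domino_problem_encode_instance:
  "domino_problem d (encode_instance Al F T) \<longleftrightarrow> (\<forall>q\<in>set F. wf_fpattern d q) \<and> A_wins_in d Al F T"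
  unfolding domino_problem_def encode_instance_eq_iff by blast

definition cell_code :: "nat \<Rightarrow> nat \<Rightarrow> nat \<Rightarrow> nat" where
  "cell_code Fc e k = fst (prod_decode (code_nth (code_nth Fc e) k))"

definition coord_code :: "nat \<Rightarrow> nat \<Rightarrow> nat \<Rightarrow> nat \<Rightarrow> int" where
  "coord_code Fc e k t = int_decode (code_nth (cell_code Fc e k) t)"

definition colour_code :: "nat \<Rightarrow> nat \<Rightarrow> nat \<Rightarrow> nat" where
  "colour_code Fc e k = snd (prod_decode (code_nth (code_nth Fc e) k))"

abbreviation patterns_code :: "fpattern list \<Rightarrow> nat" where
  "patterns_code F \<equiv> list_encode (map encode_fpattern F)"

lemma length_list_decode_encode_fpattern [simp]: "length (list_decode (encode_fpattern q)) = length q"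
  by (simp add: encode_fpattern_def)

lemma code_nth_encode_fpattern [simp]:
  "k < length q \<Longrightarrow> code_nth (encode_fpattern q) k = prod_encode (encode_cell (fst (q ! k)), snd (q ! k))"
  by (simp add: encode_fpattern_def case_prod_beta)

lemma cell_code_patterns_code [simp]:
  "e < length F \<Longrightarrow> k < length (F ! e) \<Longrightarrow> cell_code (patterns_code F) e k = encode_cell (fst (F ! e ! k))"
  by (simp add: cell_code_def)

lemma coord_code_patterns_code:
  "e < length F \<Longrightarrow> k < length (F ! e) \<Longrightarrow> t < length (fst (F ! e ! k)) \<Longrightarrow>
    coord_code (patterns_code F) e k t = fst (F ! e ! k) ! t"
  by (simp add: coord_code_def encode_cell_def)

lemma colour_code_patterns_code:
  "e < length F \<Longrightarrow> k < length (F ! e) \<Longrightarrow> colour_code (patterns_code F) e k = snd (F ! e ! k)"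
  by (simp add: colour_code_def)

definition wf_code :: "nat \<Rightarrow> nat \<Rightarrow> bool" where
  "wf_code d Fc \<longleftrightarrow> (\<forall>e<length (list_decode Fc). \<forall>k<length (list_decode (code_nth Fc e)).
     length (list_decode (cell_code Fc e k)) = d \<and> (\<forall>k'<k. cell_code Fc e k' \<noteq> cell_code Fc e k))"

lemma wf_code_iff: "wf_code d (patterns_code F) \<longleftrightarrow> (\<forall>q\<in>set F. wf_fpattern d q)"
proof -
  have "wf_fpattern d q \<longleftrightarrow> (\<forall>k<length q. length (fst (q ! k)) = d \<and> (\<forall>k'<k. fst (q ! k') \<noteq> fst (q ! k)))"
    for q :: fpattern
  proof -
    have "(\<forall>(j, c)\<in>set q. length j = d) \<longleftrightarrow> (\<forall>k<length q. length (fst (q ! k)) = d)"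
      by (auto simp: all_set_conv_all_nth case_prod_beta)
    moreover have "distinct (map fst q) \<longleftrightarrow> (\<forall>k<length q. \<forall>k'<k. fst (q ! k') \<noteq> fst (q ! k))"
      unfolding distinct_conv_nth by (auto, metis nat_neq_iff)
    ultimately show ?thesis unfolding wf_fpattern_def by blast
  qed
  moreover have "encode_cell v = encode_cell w \<longleftrightarrow> v = w" for v w
    unfolding encode_cell_def using list_encode_eq inj_int_encode by (metis inj_map_eq_map)
  ultimately show ?thesis
    unfolding wf_code_def by (simp add: all_set_conv_all_nth encode_cell_def)
qed

section \<open>The box game on codes\<close>

text \<open>The \<open>t\<close>-th coordinate of the cell onto which cell \<open>k\<close> of pattern \<open>e\<close> falls when cell \<open>0\<close>
  is placed on the box cell number \<open>i\<close>, and the digit of \<open>P\<close> describing that cell.\<close>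

definition placed_coord_code :: "nat \<Rightarrow> nat \<Rightarrow> nat \<Rightarrow> nat \<Rightarrow> nat \<Rightarrow> nat \<Rightarrow> int" where
  "placed_coord_code R Fc e i k t =
     int (digit (2 * R + 1) i t) - int R + coord_code Fc e k t - coord_code Fc e 0 t"

definition placed_digit_code :: "nat \<Rightarrow> nat \<Rightarrow> nat \<Rightarrow> nat \<Rightarrow> nat \<Rightarrow> nat \<Rightarrow> nat \<Rightarrow> nat \<Rightarrow> nat" where
  "placed_digit_code d R Ac Fc P e i k = digit (Suc (length (list_decode Ac))) P
     (\<Sum>t<d. nat (placed_coord_code R Fc e i k t + int R) * (2 * R + 1) ^ t)"

definition final_code :: "nat \<Rightarrow> nat \<Rightarrow> nat \<Rightarrow> nat \<Rightarrow> nat \<Rightarrow> bool" where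
  "final_code d R Ac Fc P \<longleftrightarrow> (\<exists>e<length (list_decode Fc). \<exists>i<(2 * R + 1) ^ d.
     \<forall>k<length (list_decode (code_nth Fc e)).
       (\<forall>t<d. \<bar>placed_coord_code R Fc e i k t\<bar> \<le> int R) \<and>
       placed_digit_code d R Ac Fc P e i k \<noteq> 0 \<and>
       code_nth Ac (placed_digit_code d R Ac Fc P e i k - 1) = colour_code Fc e k)"

lemma box_position_placed_iff:
  fixes R i :: nat
  assumes F: "\<forall>q\<in>set F. \<forall>(j, c)\<in>set q. length j = d" and e: "e < length F" and k: "k < length (F ! e)"
  defines "x \<equiv> map (\<lambda>t. box_cell d R i ! t + fst (F ! e ! k) ! t - fst (hd (F ! e)) ! t) [0..<d]"
  shows "box_position d R Al P x = Some (snd (F ! e ! k)) \<longleftrightarrow>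
    (\<forall>t<d. \<bar>placed_coord_code R (patterns_code F) e i k t\<bar> \<le> int R) \<and>
    placed_digit_code d R (list_encode Al) (patterns_code F) P e i k \<noteq> 0 \<and>
    code_nth (list_encode Al) (placed_digit_code d R (list_encode Al) (patterns_code F) P e i k - 1) =
      colour_code (patterns_code F) e k"
proof -
  have len: "length (fst (F ! e ! j)) = d" if "j < length (F ! e)" for j
    using bspec[OF bspec[OF F nth_mem[OF e]] nth_mem[OF that]] by (simp add: case_prod_beta)
  have k0: "0 < length (F ! e)" using le_less_trans[OF le0 k] .
  have hd: "hd (F ! e) = F ! e ! 0" using k hd_conv_nth[of "F ! e"] by fastforce
  have x: "x ! t = placed_coord_code R (patterns_code F) e i k t" if "t < d" for t
    using that len[OF k] len[OF k0] coord_code_patterns_code[OF e k] coord_code_patterns_code[OF e k0]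
    by (simp add: x_def hd placed_coord_code_def box_cell_def)
  then have "box_index d R x = (\<Sum>t<d. nat (placed_coord_code R (patterns_code F) e i k t + int R) * (2 * R + 1) ^ t)"
    unfolding box_index_def by (intro sum.cong) auto
  then have dig: "digit (Suc (length Al)) P (box_index d R x) = placed_digit_code d R (list_encode Al) (patterns_code F) P e i k"
    by (simp add: placed_digit_code_def)
  define D where "D = placed_digit_code d R (list_encode Al) (patterns_code F) P e i k"
  have "box_position d R Al P x = Some (snd (F ! e ! k)) \<longleftrightarrow>
      (\<forall>t<d. \<bar>placed_coord_code R (patterns_code F) e i k t\<bar> \<le> int R) \<and> D \<noteq> 0 \<and> Al ! (D - 1) = snd (F ! e ! k)"
    using box_position_eq_Some_iff[of x d R Al P "snd (F ! e ! k)"] x dig by (simp add: D_def x_def)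
  moreover have "code_nth (list_encode Al) (D - 1) = Al ! (D - 1)" if "D \<noteq> 0"
  proof -
    have "D < Suc (length Al)"
      unfolding D_def placed_digit_code_def by (simp add: digit_less)
    then have "D - 1 < length Al" using that by linarith
    then show ?thesis by simp
  qed
  ultimately show ?thesis
    using colour_code_patterns_code[OF e k] by (auto simp: D_def)
qed

lemma final_code_iff:
  assumes F: "\<forall>q\<in>set F. \<forall>(j, c)\<in>set q. length j = d"
  shows "final_code d R (list_encode Al) (patterns_code F) P \<longleftrightarrow> final d F (box_position d R Al P)"
proof -
  let ?x = "\<lambda>e i k. map (\<lambda>t. box_cell d R i ! t + fst (F ! e ! k) ! t - fst (hd (F ! e)) ! t) [0..<d]"
  have appears: "appears d (F ! e) (box_position d R Al P) \<longleftrightarrow> (\<exists>i<(2 * R + 1) ^ d.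
      \<forall>k<length (F ! e). box_position d R Al P (?x e i k) = Some (snd (F ! e ! k)))"
    if e: "e < length F" for e
    using appears_box_position_iff[OF bspec[OF F nth_mem[OF e]]] by (simp add: all_set_conv_all_nth case_prod_beta)
  have "final d F (box_position d R Al P) \<longleftrightarrow> (\<exists>e<length F. appears d (F ! e) (box_position d R Al P))"
    unfolding final_def using all_set_conv_all_nth[of F "\<lambda>q. \<not> appears d q (box_position d R Al P)"] by blast
  also have "\<dots> \<longleftrightarrow> (\<exists>e<length F. \<exists>i<(2 * R + 1) ^ d. \<forall>k<length (F ! e).
      box_position d R Al P (?x e i k) = Some (snd (F ! e ! k)))"
    using appears by blast
  also have "\<dots> \<longleftrightarrow> final_code d R (list_encode Al) (patterns_code F) P"
    unfolding final_code_def using box_position_placed_iff[OF F] by (simp cong: conj_cong)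
  finally show ?thesis ..
qed

lemma abs_coord_le_patterns_code:
  assumes "q \<in> set F" "(j, c) \<in> set q" "t < length j"
  shows "\<bar>j ! t\<bar> \<le> int (patterns_code F)"
proof -
  have "int_encode (j ! t) < encode_cell j"
    unfolding encode_cell_def using assms(3) by (intro member_less_list_encode) simp
  also have "encode_cell j \<le> prod_encode (encode_cell j, c)" by (rule le_prod_encode_1)
  also have "prod_encode (encode_cell j, c) < encode_fpattern q"
    unfolding encode_fpattern_def using assms(2) by (intro member_less_list_encode) force
  also have "encode_fpattern q < patterns_code F"
    using assms(1) by (intro member_less_list_encode) simp
  finally show ?thesis
    by (simp add: int_encode_def sum_encode_def split: if_splits)
qed

lemma pattern_diam_le_patterns_code:
  assumes wf: "\<forall>q\<in>set F. wf_fpattern d q" and q: "q \<in> set F"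
  shows "pattern_diam_le d (int (2 * patterns_code F + 1)) q"
proof -
  have len: "length j = d" if "(j, c) \<in> set q" for j c
    using wf q that unfolding wf_fpattern_def by blast
  have "near d (int (2 * patterns_code F + 1)) j j'" if "(j, c) \<in> set q" "(j', c') \<in> set q" for j c j' c'
    unfolding near_def
  proof (intro allI impI)
    fix t assume "t < d"
    then have "\<bar>j ! t\<bar> \<le> int (patterns_code F)" "\<bar>j' ! t\<bar> \<le> int (patterns_code F)"
      using abs_coord_le_patterns_code[OF q that(1)] abs_coord_le_patterns_code[OF q that(2)]
        len[OF that(1)] len[OF that(2)] by simp_all
    then show "\<bar>j ! t - j' ! t\<bar> \<le> int (2 * patterns_code F + 1)" by linarith
  qed
  then show ?thesis
    unfolding pattern_diam_le_def using len by blast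
qed

lemma in_box_box_cell_iff:
  "in_box d r (box_cell d R i) \<longleftrightarrow> (\<forall>t<d. \<bar>int (digit (2 * R + 1) i t) - int R\<bar> \<le> r)"
  by (simp add: in_box_def box_cell_def)

text \<open>Patterns coded by \<open>Fc\<close> have diameter at most \<open>D = 2 * Fc + 1\<close>. The box of the
  \<open>k\<close>-th last move has radius \<open>(T + 1 - k) * G\<close>, where the step \<open>G\<close> exceeds every scale
  \<open>D * 2 ^ k\<close> with \<open>k < T\<close>.\<close>

definition radius_step :: "nat \<Rightarrow> nat \<Rightarrow> nat" where
  "radius_step Fc T = (2 * Fc + 1) * 2 ^ T + 1"

definition box_radius :: "nat \<Rightarrow> nat \<Rightarrow> nat" where
  "box_radius Fc T = T * radius_step Fc T"

definition win_code :: "nat \<Rightarrow> nat \<Rightarrow> nat \<Rightarrow> nat \<Rightarrow> bool" where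
  "win_code d Ac Fc T \<longleftrightarrow>
     0 \<in> set_decode (win_table (final_code d (box_radius Fc T) Ac Fc)
       (\<lambda>k i. in_box d (int ((T + 1 - k) * radius_step Fc T)) (box_cell d (box_radius Fc T) i))
       (length (list_decode Ac)) ((2 * box_radius Fc T + 1) ^ d) T T)"

lemma radius_step_gt_scale:
  assumes "k < T"
  shows "int ((T + 1 - Suc (Suc k)) * radius_step Fc T) + int (2 * Fc + 1) * 2 ^ k + 1 \<le>
    int ((T + 1 - Suc k) * radius_step Fc T)"
proof -
  have "(2 * Fc + 1) * 2 ^ k \<le> (2 * Fc + 1) * 2 ^ T"
    using assms by (intro mult_left_mono power_increasing) auto
  then have "(2 * Fc + 1) * 2 ^ k + 1 \<le> radius_step Fc T" by (simp add: radius_step_def)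
  then have "int ((2 * Fc + 1) * 2 ^ k + 1) \<le> int (radius_step Fc T)"
    by (simp only: of_nat_le_iff)
  moreover have "T + 1 - Suc k = Suc (T + 1 - Suc (Suc k))" using assms by simp
  then have "(T + 1 - Suc k) * radius_step Fc T = (T + 1 - Suc (Suc k)) * radius_step Fc T + radius_step Fc T"
    by (simp only: mult_Suc add.commute)
  ultimately show ?thesis by (simp add: algebra_simps)
qed

lemma win_code_iff:
  assumes d: "0 < d" and wf: "\<forall>q\<in>set F. wf_fpattern d q"
  shows "win_code d (list_encode Al) (patterns_code F) T \<longleftrightarrow> A_wins_in d Al F T"
proof -
  define G where "G = radius_step (patterns_code F) T"
  define R where "R = box_radius (patterns_code F) T"
  define r where "r = (\<lambda>k. int ((T + 1 - k) * G))"
  let ?D = "int (2 * patterns_code F + 1)"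
  have scale: "r (Suc (Suc k)) + ?D * 2 ^ k + 1 \<le> r (Suc k)" if "k < T" for k
    using radius_step_gt_scale[OF that] by (simp add: r_def G_def)
  have F: "\<forall>q\<in>set F. pattern_diam_le d ?D q"
    using pattern_diam_le_patterns_code[OF wf] by blast
  have "wins_within_box d Al F r T Map.empty True \<longleftrightarrow> wins_within d Al F T Map.empty True"
    by (rule wins_within_box_iff[OF d _ F _ scale]) (auto simp: r_def wf_position_def)
  moreover have "0 \<in> set_decode (win_table (final_code d R (list_encode Al) (patterns_code F))
      (\<lambda>k i. in_box d (r k) (box_cell d R i)) (length Al) ((2 * R + 1) ^ d) T T) \<longleftrightarrow>
    wins_within_box d Al F r T (box_position d R Al 0) (even (T - T))"
  proof (rule win_table_correct)
    show "final_code d R (list_encode Al) (patterns_code F) P \<longleftrightarrow> final d F (box_position d R Al P)" for P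
      using wf final_code_iff unfolding wf_fpattern_def by blast
    show "r k \<le> int R" if "1 \<le> k" for k
    proof -
      have "(T + 1 - k) * G \<le> T * G" using that by (intro mult_right_mono) auto
      then show ?thesis unfolding r_def R_def box_radius_def G_def[symmetric] by (simp only: of_nat_le_iff)
    qed
  qed simp_all
  ultimately show ?thesis
    unfolding win_code_def A_wins_in_def by (simp add: box_position_0 R_def G_def r_def)
qed

definition domino_code :: "nat \<Rightarrow> nat \<Rightarrow> bool" where
  "domino_code d c \<longleftrightarrow>
     (let Ac = fst (prod_decode c); Fc = fst (prod_decode (snd (prod_decode c)));
          T = snd (prod_decode (snd (prod_decode c)))
      in wf_code d Fc \<and> win_code d Ac Fc T)"

lemma domino_problem_iff_domino_code: "0 < d \<Longrightarrow> domino_problem d c \<longleftrightarrow> domino_code d c"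
proof -
  assume d: "0 < d"
  obtain Al F T where c: "c = encode_instance Al F T" using ex_encode_instance by blast
  have "domino_code d c \<longleftrightarrow> wf_code d (patterns_code F) \<and> win_code d (list_encode Al) (patterns_code F) T"
    by (simp add: c domino_code_def encode_instance_def Let_def)
  also have "\<dots> \<longleftrightarrow> (\<forall>q\<in>set F. wf_fpattern d q) \<and> A_wins_in d Al F T"
    using wf_code_iff win_code_iff[OF d] by blast
  finally show ?thesis
    by (simp add: c domino_problem_encode_instance)
qed

lemma computable_digit:
  "computable n A \<Longrightarrow> computable n B \<Longrightarrow> computable n C \<Longrightarrow> computable n (\<lambda>xs. digit (A xs) (B xs) (C xs))"
  unfolding digit_def by (intro computable_mod computable_div computable_pow)

lemmas computable_intros =
  computable_const computable_proj computable_nth_drop computable_Suc computable_add computable_mult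
  computable_diff computable_pow computable_sum
  computable_pred_eq computable_pred_not computable_pred_conj
  computable_pred_disj computable_pred_imp computable_pred_if computable_pred_bex computable_pred_ball
  computable_pred_even computable_prod_decode computable_code_nth computable_length_list_decode
  computable_set_encode computable_pred_in_set_decode computable_digit
  computable_int_decode computable_of_nat computable_nat computable_int_add computable_int_diff
  computable_int_abs computable_pred_int_le

lemma computable_pred_final_code:
  "computable n R \<Longrightarrow> computable n Ac \<Longrightarrow> computable n Fc \<Longrightarrow> computable n P \<Longrightarrow>
   computable_pred n (\<lambda>xs. final_code d (R xs) (Ac xs) (Fc xs) (P xs))"
proof -
  have "computable_pred 4 (\<lambda>ys. final_code d (ys ! 0) (ys ! 1) (ys ! 2) (ys ! 3))"
    unfolding final_code_def placed_digit_code_def placed_coord_code_def coord_code_def colour_code_def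
      cell_code_def
    by (intro computable_intros; (simp only: drop_drop)?)+
  then show "computable n R \<Longrightarrow> computable n Ac \<Longrightarrow> computable n Fc \<Longrightarrow> computable n P \<Longrightarrow>
      computable_pred n (\<lambda>xs. final_code d (R xs) (Ac xs) (Fc xs) (P xs))"
    using computable_compose4 by fastforce
qed

lemma computable_pred_wf_code: "computable n Fc \<Longrightarrow> computable_pred n (\<lambda>xs. wf_code d (Fc xs))"
proof -
  have "computable_pred 1 (\<lambda>ys. wf_code d (ys ! 0))"
    unfolding wf_code_def cell_code_def by (intro computable_intros; (simp only: drop_drop)?)+
  then show "computable n Fc \<Longrightarrow> computable_pred n (\<lambda>xs. wf_code d (Fc xs))"
    using computable_compose1 by fastforce
qed

lemma win_table_eq_rec_nat:
  "win_table fin inb K N T n = rec_nat (set_encode {P. P < Suc K ^ N \<and> fin P})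
     (\<lambda>m S. set_encode {P. P < Suc K ^ N \<and> win_step fin inb K N T m (set_decode S) P}) n"
  by (induction n) simp_all

lemma computable_pred_win_code:
  "computable n Ac \<Longrightarrow> computable n Fc \<Longrightarrow> computable n T \<Longrightarrow> computable_pred n (\<lambda>xs. win_code d (Ac xs) (Fc xs) (T xs))"
proof -
  have "computable_pred 3 (\<lambda>ys. win_code d (ys ! 0) (ys ! 1) (ys ! 2))"
    unfolding win_code_def win_table_eq_rec_nat win_step_def in_box_box_cell_iff box_radius_def radius_step_def
    by (intro computable_intros computable_rec_nat computable_pred_final_code; (simp only: drop_drop)?)+
  then show "computable n Ac \<Longrightarrow> computable n Fc \<Longrightarrow> computable n T \<Longrightarrow>
      computable_pred n (\<lambda>xs. win_code d (Ac xs) (Fc xs) (T xs))"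
    using computable_compose3 by fastforce
qed

lemma computable_pred_domino_code: "computable_pred 1 (\<lambda>xs. domino_code d (xs ! 0))"
  unfolding domino_code_def Let_def
  by (intro computable_pred_conj computable_pred_wf_code computable_pred_win_code computable_intros) simp_all

theorem theorem2:
  fixes d :: nat
  assumes "d \<ge> 1"
  shows "decidable (domino_problem d)"
proof -
  have "computable_pred 1 (\<lambda>xs. domino_problem d (xs ! 0))"
    using computable_pred_domino_code domino_problem_iff_domino_code assms by simp
  then show ?thesis by (rule decidableI)
qed

end
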